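(* Let $\mathcal{R}=(G_0,e\to R)$ be an expanding replacement system with limit space $X$ and rearrangement group $\mathcal{G}$. Then every finite subgroup of $\mathcal{G}$ is contained in $\mathrm{Aut}_{\mathcal{R}}(E)$ for some expansion $E$ of $G_0$.
   Context: A graph means a finite directed multigraph (loops, multiple edges allowed); isomorphisms preserve directions. A replacement system $\mathcal{R}=(G_0,e\to R)$: $G_0$ a graph, $e$ a non-loop directed edge from $v$ to $w$, $R$ a graph containing $v,w$ (initial and terminal vertices). Replacing an edge $\varepsilon$ of a graph means deleting it and gluing in a copy of $R$ with initial/terminal vertices identified with those of $\varepsilon$; new edges are named $\varepsilon\zeta$ ($\zeta\in E(R)$). An expansion of $G_0$ is a graph obtained by finitely many replacements; its edges are words $\varepsilon_0\varepsilon_1\cdots\varepsilon_n$. $G_n$ denotes the graph obtained by replacing all edges $n$ times. $\mathcal{R}$ is expanding if neither $G_0$ nor $R$ has isolated vertices, the initial and terminal vertices of $R$ are not adjacent, and $R$ has at least three vertices and two edges. $\Omega=E(G_0)\times E(R)^{\mathbb{N}}$; $\varepsilon_0\varepsilon_1\cdots\sim\varepsilon'_0\varepsilon'_1\cdots$ iff for all $n$ the edges $\varepsilon_0\cdots\varepsilon_n$ and $\varepsilon'_0\cdots\varepsilon'_n$ of $G_n$ share a vertex; $X=\Omega/\sim$. The cell $C(e')$ of an edge $e'$ of an expansion is the image of all sequences with prefix $e'$; its interior excludes the (images of the) endpoints of $e'$. For $e',e''$ both loops or both non-loops, the canonical homeomorphism $C(e')\to C(e'')$ is induced by $e'\zeta_1\zeta_2\cdots\mapsto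 e''\zeta_1\zeta_2\cdots$. A rearrangement of $X$ is a homeomorphism $X\to X$ restricting to a canonical homeomorphism on each cell of some finite cover of $X$ by cells with disjoint interiors; $\mathcal{G}$ is the group of all rearrangements. For an expansion $E$ of $G_0$, $\mathrm{Aut}_{\mathcal{R}}(E)$ is the subgroup of $\mathcal{G}$ consisting of all rearrangements $f$ for which there is a directed graph automorphism $\varphi$ of $E$ such that $f$ maps $C(\epsilon)$ canonically onto $C(\varphi(\epsilon))$ for each edge $\epsilon$ of $E$. *)

theory Defs
  imports "HOL-Analysis.Analysis" "HOL-Algebra.Group"
begin

record ('v,'e) graph =
  verts :: "'v set"
  arcs :: "'e set"
  tail :: "'e \<Rightarrow> 'v"
  head :: "'e \<Rightarrow> 'v"

definition wf_graph :: "('v,'e) graph \<Rightarrow> bool" where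
  "wf_graph G \<longleftrightarrow> finite (verts G) \<and> finite (arcs G) \<and>
     tail G ` arcs G \<subseteq> verts G \<and> head G ` arcs G \<subseteq> verts G"

definition no_isolated :: "('v,'e) graph \<Rightarrow> bool" where
  "no_isolated G \<longleftrightarrow> (\<forall>v\<in>verts G. \<exists>a\<in>arcs G. v = tail G a \<or> v = head G a)"

text \<open>A replacement system (G0, e -> R): base graph G0, replacement graph R with
  initial vertex ini and terminal vertex ter (the endpoints of the replaced edge e).\<close>

record ('v,'e) repsys =
  base :: "('v,'e) graph"
  rep :: "('v,'e) graph"
  ini :: 'v
  ter :: 'v

definition replacement_system :: "('v,'e) repsys \<Rightarrow> bool" where
  "replacement_system RS \<longleftrightarrow> wf_graph (base RS) \<and> wf_graph (rep RS) \<and>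
     ini RS \<in> verts (rep RS) \<and> ter RS \<in> verts (rep RS) \<and> ini RS \<noteq> ter RS"

definition expanding :: "('v,'e) repsys \<Rightarrow> bool" where
  "expanding RS \<longleftrightarrow> replacement_system RS \<and>
     no_isolated (base RS) \<and> no_isolated (rep RS) \<and>
     \<not> (\<exists>a\<in>arcs (rep RS). {tail (rep RS) a, head (rep RS) a} = {ini RS, ter RS}) \<and>
     card (verts (rep RS)) \<ge> 3 \<and> card (arcs (rep RS)) \<ge> 2"

text \<open>Graphs obtained by replacement: edges are words (lists of edge names), vertices are
  pairs (w, u): ([], v) for a vertex v of G0, and (eps, u) for the copy of the internal
  vertex u of R glued in when the edge eps was replaced.\<close>

type_synonym ('v,'e) xgraph = "('e list \<times> 'v, 'e list) graph"

definition lift0 :: "('v,'e) repsys \<Rightarrow> ('v,'e) xgraph" where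
  "lift0 RS = \<lparr>verts = (\<lambda>v. ([], v)) ` verts (base RS),
              arcs = (\<lambda>a. [a]) ` arcs (base RS),
              tail = (\<lambda>w. ([], tail (base RS) (hd w))),
              head = (\<lambda>w. ([], head (base RS) (hd w)))\<rparr>"

definition vmap :: "('v,'e) repsys \<Rightarrow> ('v,'e) xgraph \<Rightarrow> 'e list \<Rightarrow> 'v \<Rightarrow> 'e list \<times> 'v" where
  "vmap RS \<Gamma> \<epsilon> u = (if u = ini RS then tail \<Gamma> \<epsilon> else if u = ter RS then head \<Gamma> \<epsilon> else (\<epsilon>, u))"

definition replace :: "('v,'e) repsys \<Rightarrow> ('v,'e) xgraph \<Rightarrow> 'e list \<Rightarrow> ('v,'e) xgraph" where
  "replace RS \<Gamma> \<epsilon> =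
     \<lparr>verts = verts \<Gamma> \<union> (\<lambda>u. (\<epsilon>, u)) ` (verts (rep RS) - {ini RS, ter RS}),
      arcs = (arcs \<Gamma> - {\<epsilon>}) \<union> (\<lambda>z. \<epsilon> @ [z]) ` arcs (rep RS),
      tail = (\<lambda>x. if x \<in> (\<lambda>z. \<epsilon> @ [z]) ` arcs (rep RS)
                  then vmap RS \<Gamma> \<epsilon> (tail (rep RS) (last x)) else tail \<Gamma> x),
      head = (\<lambda>x. if x \<in> (\<lambda>z. \<epsilon> @ [z]) ` arcs (rep RS)
                  then vmap RS \<Gamma> \<epsilon> (head (rep RS) (last x)) else head \<Gamma> x)\<rparr>"

inductive_set expansions :: "('v,'e) repsys \<Rightarrow> ('v,'e) xgraph set" for RS where
  base_exp: "lift0 RS \<in> expansions RS"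
| replace_exp: "\<Gamma> \<in> expansions RS \<Longrightarrow> \<epsilon> \<in> arcs \<Gamma> \<Longrightarrow> replace RS \<Gamma> \<epsilon> \<in> expansions RS"

definition replace_all :: "('v,'e) repsys \<Rightarrow> ('v,'e) xgraph \<Rightarrow> ('v,'e) xgraph" where
  "replace_all RS \<Gamma> =
     \<lparr>verts = verts \<Gamma> \<union> {(\<epsilon>, u) | \<epsilon> u. \<epsilon> \<in> arcs \<Gamma> \<and> u \<in> verts (rep RS) - {ini RS, ter RS}},
      arcs = {\<epsilon> @ [z] | \<epsilon> z. \<epsilon> \<in> arcs \<Gamma> \<and> z \<in> arcs (rep RS)},
      tail = (\<lambda>x. vmap RS \<Gamma> (butlast x) (tail (rep RS) (last x))),
      head = (\<lambda>x. vmap RS \<Gamma> (butlast x) (head (rep RS) (last x)))\<rparr>"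

fun Gn :: "('v,'e) repsys \<Rightarrow> nat \<Rightarrow> ('v,'e) xgraph" where
  "Gn RS 0 = lift0 RS"
| "Gn RS (Suc n) = replace_all RS (Gn RS n)"

definition Omega :: "('v,'e) repsys \<Rightarrow> (nat \<Rightarrow> 'e) set" where
  "Omega RS = {\<omega>. \<omega> 0 \<in> arcs (base RS) \<and> (\<forall>n. \<omega> (Suc n) \<in> arcs (rep RS))}"

definition pref :: "(nat \<Rightarrow> 'e) \<Rightarrow> nat \<Rightarrow> 'e list" where
  "pref \<omega> n = map \<omega> [0..<Suc n]"

definition ends :: "('v,'e) graph \<Rightarrow> 'e \<Rightarrow> 'v set" where
  "ends G x = {tail G x, head G x}"

definition omrel :: "('v,'e) repsys \<Rightarrow> ((nat \<Rightarrow> 'e) \<times> (nat \<Rightarrow> 'e)) set" where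
  "omrel RS = {(\<omega>, \<omega>'). \<omega> \<in> Omega RS \<and> \<omega>' \<in> Omega RS \<and>
      (\<forall>n. ends (Gn RS n) (pref \<omega> n) \<inter> ends (Gn RS n) (pref \<omega>' n) \<noteq> {})}"

definition Xsp :: "('v,'e) repsys \<Rightarrow> (nat \<Rightarrow> 'e) set set" where
  "Xsp RS = Omega RS // omrel RS"

definition cls :: "('v,'e) repsys \<Rightarrow> (nat \<Rightarrow> 'e) \<Rightarrow> (nat \<Rightarrow> 'e) set" where
  "cls RS \<omega> = omrel RS `` {\<omega>}"

definition Omega_top :: "('v,'e) repsys \<Rightarrow> (nat \<Rightarrow> 'e) topology" where
  "Omega_top RS = subtopology (product_topology (\<lambda>n. discrete_topology UNIV) UNIV) (Omega RS)"

definition X_open :: "('v,'e) repsys \<Rightarrow> (nat \<Rightarrow> 'e) set set \<Rightarrow> bool" where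
  "X_open RS U \<longleftrightarrow> U \<subseteq> Xsp RS \<and> openin (Omega_top RS) {\<omega> \<in> Omega RS. cls RS \<omega> \<in> U}"

lemma istopology_X_open: "istopology (X_open RS)"
  unfolding istopology_def
proof (intro conjI allI impI)
  fix S T assume "X_open RS S" "X_open RS T"
  then show "X_open RS (S \<inter> T)"
    unfolding X_open_def
    by (auto dest: openin_Int simp: Collect_conj_eq[symmetric] conj_assoc
        intro: back_subst[where P="openin (Omega_top RS)"])
next
  fix K assume K: "\<forall>S\<in>K. X_open RS S"
  have "{\<omega> \<in> Omega RS. cls RS \<omega> \<in> \<Union>K} = (\<Union>S\<in>K. {\<omega> \<in> Omega RS. cls RS \<omega> \<in> S})" by auto
  moreover have "openin (Omega_top RS) (\<Union>S\<in>K. {\<omega> \<in> Omega RS. cls RS \<omega> \<in> S})"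
    using K unfolding X_open_def by auto
  ultimately show "X_open RS (\<Union>K)" using K unfolding X_open_def by auto
qed

definition X_top :: "('v,'e) repsys \<Rightarrow> (nat \<Rightarrow> 'e) set topology" where
  "X_top RS = topology (X_open RS)"

text \<open>Words that are edges of some expansion (equivalently of G_n, n = length - 1).\<close>
definition valid_word :: "('v,'e) repsys \<Rightarrow> 'e list \<Rightarrow> bool" where
  "valid_word RS w \<longleftrightarrow> w \<noteq> [] \<and> hd w \<in> arcs (base RS) \<and> set (tl w) \<subseteq> arcs (rep RS)"

definition cell :: "('v,'e) repsys \<Rightarrow> 'e list \<Rightarrow> (nat \<Rightarrow> 'e) set set" where
  "cell RS w = cls RS ` {\<omega> \<in> Omega RS. pref \<omega> (length w - 1) = w}"

text \<open>The point of X represented by a vertex v: sequences whose edges eventually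
  are all incident to v.\<close>
definition vpoint :: "('v,'e) repsys \<Rightarrow> 'e list \<times> 'v \<Rightarrow> (nat \<Rightarrow> 'e) set set" where
  "vpoint RS v = {cls RS \<omega> | \<omega>. \<omega> \<in> Omega RS \<and> (\<exists>N. \<forall>m\<ge>N. v \<in> ends (Gn RS m) (pref \<omega> m))}"

definition cell_interior :: "('v,'e) repsys \<Rightarrow> 'e list \<Rightarrow> (nat \<Rightarrow> 'e) set set" where
  "cell_interior RS w = cell RS w -
     (vpoint RS (tail (Gn RS (length w - 1)) w) \<union> vpoint RS (head (Gn RS (length w - 1)) w))"

definition is_loop :: "('v,'e) repsys \<Rightarrow> 'e list \<Rightarrow> bool" where
  "is_loop RS w \<longleftrightarrow> tail (Gn RS (length w - 1)) w = head (Gn RS (length w - 1)) w"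

definition reprefix :: "'e list \<Rightarrow> 'e list \<Rightarrow> (nat \<Rightarrow> 'e) \<Rightarrow> (nat \<Rightarrow> 'e)" where
  "reprefix w w' \<omega> = (\<lambda>i. if i < length w' then w' ! i else \<omega> (i - length w' + length w))"

definition canonical_on :: "('v,'e) repsys \<Rightarrow> ((nat \<Rightarrow> 'e) set \<Rightarrow> (nat \<Rightarrow> 'e) set) \<Rightarrow> 'e list \<Rightarrow> 'e list \<Rightarrow> bool" where
  "canonical_on RS f w w' \<longleftrightarrow> (is_loop RS w \<longleftrightarrow> is_loop RS w') \<and>
     (\<forall>\<omega>\<in>Omega RS. pref \<omega> (length w - 1) = w \<longrightarrow> f (cls RS \<omega>) = cls RS (reprefix w w' \<omega>))"

definition rearrangement :: "('v,'e) repsys \<Rightarrow> ((nat \<Rightarrow> 'e) set \<Rightarrow> (nat \<Rightarrow> 'e) set) \<Rightarrow> bool" where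
  "rearrangement RS f \<longleftrightarrow> f \<in> extensional (Xsp RS) \<and> homeomorphic_map (X_top RS) (X_top RS) f \<and>
     (\<exists>S. finite S \<and> (\<forall>w\<in>S. valid_word RS w) \<and> \<Union>(cell RS ` S) = Xsp RS \<and>
        (\<forall>w\<in>S. \<forall>w'\<in>S. w \<noteq> w' \<longrightarrow> cell_interior RS w \<inter> cell_interior RS w' = {}) \<and>
        (\<forall>w\<in>S. \<exists>w'. valid_word RS w' \<and> canonical_on RS f w w'))"

text \<open>The rearrangement group (functions are extensional on X).\<close>
definition rearr_group :: "('v,'e) repsys \<Rightarrow> ((nat \<Rightarrow> 'e) set \<Rightarrow> (nat \<Rightarrow> 'e) set) monoid" where
  "rearr_group RS = \<lparr>carrier = {f. rearrangement RS f},
                     monoid.mult = (\<lambda>f g. compose (Xsp RS) f g),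
                     one = restrict id (Xsp RS)\<rparr>"

definition Aut_R :: "('v,'e) repsys \<Rightarrow> ('v,'e) xgraph \<Rightarrow> ((nat \<Rightarrow> 'e) set \<Rightarrow> (nat \<Rightarrow> 'e) set) set" where
  "Aut_R RS E = {f \<in> carrier (rearr_group RS). \<exists>\<phi>v \<phi>e.
      bij_betw \<phi>v (verts E) (verts E) \<and> bij_betw \<phi>e (arcs E) (arcs E) \<and>
      (\<forall>x\<in>arcs E. tail E (\<phi>e x) = \<phi>v (tail E x) \<and> head E (\<phi>e x) = \<phi>v (head E x)) \<and>
      (\<forall>x\<in>arcs E. canonical_on RS f x (\<phi>e x))}"

end

theory Submission
  imports Defs "HOL-Library.Sublist"
begin

text \<open>Fix a level N beyond which every element of H acts canonically on all edges. The images of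
  the level-N edges under an element of H form a cut, i.e. the edge set of an expansion, and the
  maximal words among all these images form a common refinement C, which H permutes. Canonical
  maps are determined by their effect on generic sequences (which are alone in their equivalence
  class) and send sequences converging to a vertex to sequences converging to the corresponding
  vertex, so each element of H induces compatible permutations of the edges and vertices of the
  expansion realizing C.\<close>

lemma prefix_length_eq: "prefix xs ys \<Longrightarrow> length xs = length ys \<Longrightarrow> xs = ys"
  by (auto simp: prefix_def)

definition starts_with :: "(nat \<Rightarrow> 'e) \<Rightarrow> 'e list \<Rightarrow> bool" where
  "starts_with \<omega> w \<longleftrightarrow> w \<noteq> [] \<and> (\<forall>i<length w. \<omega> i = w ! i)"

definition prepend :: "'e list \<Rightarrow> (nat \<Rightarrow> 'e) \<Rightarrow> nat \<Rightarrow> 'e" where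
  "prepend xs t = (\<lambda>i. if i < length xs then xs ! i else t (i - length xs))"

lemma length_pref [simp]: "length (pref \<omega> n) = Suc n"
  by (simp add: pref_def)

lemma pref_neq_Nil [simp]: "pref \<omega> n \<noteq> []"
  by (simp add: pref_def)

lemma nth_pref: "i \<le> n \<Longrightarrow> pref \<omega> n ! i = \<omega> i"
  by (simp add: pref_def nth_map_upt del: upt_Suc)

lemma pref_Suc: "pref \<omega> (Suc n) = pref \<omega> n @ [\<omega> (Suc n)]"
  by (simp add: pref_def)

lemma prefix_pref: "n \<le> m \<Longrightarrow> prefix (pref \<omega> n) (pref \<omega> m)"
proof (induction m)
  case (Suc m)
  show ?case
  proof (cases "n \<le> m")
    case True
    then have "prefix (pref \<omega> n) (pref \<omega> m)" by (rule Suc.IH)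
    moreover have "prefix (pref \<omega> m) (pref \<omega> (Suc m))" by (simp add: pref_Suc)
    ultimately show ?thesis by (rule prefix_order.trans)
  next
    case False
    then show ?thesis using Suc.prems by (simp add: le_Suc_eq)
  qed
qed simp

lemma pref_eq_iff_starts_with: "w \<noteq> [] \<Longrightarrow> pref \<omega> (length w - 1) = w \<longleftrightarrow> starts_with \<omega> w"
proof -
  assume "w \<noteq> []"
  then have l: "Suc (length w - 1) = length w" by (cases w) auto
  have "map \<omega> [0..<length w] = w \<longleftrightarrow> map \<omega> [0..<length w] = map ((!) w) [0..<length w]"
    by (simp only: map_nth)
  also have "\<dots> \<longleftrightarrow> (\<forall>i\<in>set [0..<length w]. \<omega> i = w ! i)"
    by (rule map_eq_conv)
  finally show ?thesis
    using \<open>w \<noteq> []\<close> by (simp add: pref_def l starts_with_def Ball_def)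
qed

lemma starts_with_pref: "starts_with \<omega> (pref \<omega> n)"
  by (simp add: starts_with_def nth_pref)

lemma starts_with_imp_pref_eq: "starts_with \<omega> w \<Longrightarrow> pref \<omega> (length w - 1) = w"
  using pref_eq_iff_starts_with starts_with_def by blast

lemma starts_with_prefix_cases:
  assumes "starts_with \<omega> w" "starts_with \<omega> w'"
  shows "prefix w w' \<or> prefix w' w"
proof -
  have "prefix (pref \<omega> (length w - 1)) (pref \<omega> (length w' - 1)) \<or>
        prefix (pref \<omega> (length w' - 1)) (pref \<omega> (length w - 1))"
    using prefix_pref nat_le_linear by blast
  then show ?thesis
    unfolding starts_with_imp_pref_eq[OF assms(1)] starts_with_imp_pref_eq[OF assms(2)] .
qed

lemma starts_with_prefix: "starts_with \<omega> w' \<Longrightarrow> prefix w w' \<Longrightarrow> w \<noteq> [] \<Longrightarrow> starts_with \<omega> w"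
  unfolding starts_with_def prefix_def by (auto simp: nth_append)

lemma starts_with_prepend: "xs \<noteq> [] \<Longrightarrow> starts_with (prepend xs t) xs"
  by (simp add: starts_with_def prepend_def)

lemma prepend_prepend: "prepend xs (prepend ys t) = prepend (xs @ ys) t"
  by (auto simp: prepend_def nth_append fun_eq_iff)

lemma pref_prepend: "xs \<noteq> [] \<Longrightarrow> pref (prepend xs t) (length xs - 1 + k) = xs @ map t [0..<k]"
proof -
  assume "xs \<noteq> []"
  then have l: "Suc (length xs - 1 + k) = length xs + k" by (cases xs) auto
  show ?thesis unfolding pref_def l
    by (rule nth_equalityI) (simp_all add: nth_append prepend_def del: upt_Suc upt_add_eq_append)
qed

lemma pref_prepend_short: "n < length xs \<Longrightarrow> pref (prepend xs t) n = take (Suc n) xs"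
  unfolding pref_def prepend_def by (rule nth_equalityI) (simp_all del: upt_Suc)

lemma reprefix_prepend: "length w = length xs \<Longrightarrow> reprefix w u (prepend xs t) = prepend u t"
  by (auto simp: reprefix_def prepend_def fun_eq_iff)

lemma reprefix_eq_prepend: "reprefix w u \<omega> = prepend u (\<lambda>i. \<omega> (i + length w))"
  by (auto simp: reprefix_def prepend_def fun_eq_iff)

lemma reprefix_reprefix: "reprefix u v (reprefix w u \<omega>) = reprefix w v \<omega>"
  by (auto simp: reprefix_def fun_eq_iff)

lemma reprefix_self: "starts_with \<omega> u \<Longrightarrow> reprefix u u \<omega> = \<omega>"
  by (auto simp: reprefix_def starts_with_def fun_eq_iff)

lemma starts_with_reprefix: "u \<noteq> [] \<Longrightarrow> starts_with (reprefix w u \<omega>) u"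
  by (auto simp: reprefix_def starts_with_def)

lemma reprefix_append:
  assumes "starts_with \<omega> (w @ r)"
  shows "reprefix w u \<omega> = reprefix (w @ r) (u @ r) \<omega>"
proof
  fix i
  have r: "\<omega> (k + length w) = r ! k" if "k < length r" for k
    using assms that unfolding starts_with_def by (metis add.commute length_append nat_add_left_cancel_less nth_append_length_plus)
  show "reprefix w u \<omega> i = reprefix (w @ r) (u @ r) \<omega> i"
  proof (cases "i < length u")
    case False
    then obtain k where "i = length u + k" by (metis le_Suc_ex not_less)
    then show ?thesis using r by (simp add: reprefix_def nth_append)
  qed (simp add: reprefix_def nth_append)
qed

locale expanding_system =
  fixes RS :: "('v,'e) repsys"
  assumes expanding: "expanding RS"
begin

abbreviation "R \<equiv> rep RS"
abbreviation "G0 \<equiv> base RS"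
abbreviation "\<iota> \<equiv> ini RS"
abbreviation "\<tau> \<equiv> ter RS"

lemma ini_neq_ter: "\<iota> \<noteq> \<tau>"
  and ini_in_verts: "\<iota> \<in> verts R"
  and ter_in_verts: "\<tau> \<in> verts R"
  and wf_rep: "wf_graph R"
  and wf_base: "wf_graph G0"
  and rep_no_isolated: "no_isolated R"
  and base_no_isolated: "no_isolated G0"
  and ini_ter_not_adjacent: "z \<in> arcs R \<Longrightarrow> {tail R z, head R z} \<noteq> {\<iota>, \<tau>}"
  and three_le_card_verts: "3 \<le> card (verts R)"
  and two_le_card_arcs: "2 \<le> card (arcs R)"
  using expanding unfolding expanding_def replacement_system_def by auto

lemma finite_rep_arcs: "finite (arcs R)"
  and finite_base_arcs: "finite (arcs G0)"
  and tail_rep_in_verts: "z \<in> arcs R \<Longrightarrow> tail R z \<in> verts R"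
  and head_rep_in_verts: "z \<in> arcs R \<Longrightarrow> head R z \<in> verts R"
  using wf_rep wf_base unfolding wf_graph_def by auto

lemma incident_arc_ex: "r \<in> verts R \<Longrightarrow> \<exists>z\<in>arcs R. tail R z = r \<or> head R z = r"
  using rep_no_isolated unfolding no_isolated_def by metis

lemma internal_vert_ex: "\<exists>u\<in>verts R. u \<noteq> \<iota> \<and> u \<noteq> \<tau>"
proof (rule ccontr)
  assume "\<not> ?thesis"
  then have "card (verts R) \<le> card {\<iota>, \<tau>}"
    by (intro card_mono) auto
  also have "\<dots> \<le> 2" by (simp add: card_insert_le_m1)
  finally show False using three_le_card_verts by simp
qed

definition src :: "'e list \<Rightarrow> 'e list \<times> 'v" where
  "src w = tail (Gn RS (length w - 1)) w"

definition tgt :: "'e list \<Rightarrow> 'e list \<times> 'v" where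
  "tgt w = head (Gn RS (length w - 1)) w"

definition endpoints :: "'e list \<Rightarrow> ('e list \<times> 'v) set" where
  "endpoints w = {src w, tgt w}"

text \<open>The vertex of G_n into which the vertex r of R is glued when the edge w of G_{n-1} is replaced.\<close>
definition glued :: "'e list \<Rightarrow> 'v \<Rightarrow> 'e list \<times> 'v" where
  "glued w r = (if r = \<iota> then src w else if r = \<tau> then tgt w else (w, r))"

lemma src_snoc: "w \<noteq> [] \<Longrightarrow> src (w @ [z]) = glued w (tail R z)"
  and tgt_snoc: "w \<noteq> [] \<Longrightarrow> tgt (w @ [z]) = glued w (head R z)"
  by (cases w; simp add: src_def tgt_def glued_def replace_all_def vmap_def)+

lemma src_single: "src [a] = ([], tail G0 a)"
  and tgt_single: "tgt [a] = ([], head G0 a)"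
  by (simp_all add: src_def tgt_def lift0_def)

lemma glued_ini: "glued w \<iota> = src w"
  and glued_ter: "glued w \<tau> = tgt w"
  using ini_neq_ter by (auto simp: glued_def)

lemma endpoints_snoc: "w \<noteq> [] \<Longrightarrow> endpoints (w @ [z]) = {glued w (tail R z), glued w (head R z)}"
  by (simp add: endpoints_def src_snoc tgt_snoc)

lemma glued_cases: "glued w r \<in> endpoints w \<or> glued w r = (w, r)"
  by (auto simp: glued_def endpoints_def)

lemma endpoints_snoc_cases: "w \<noteq> [] \<Longrightarrow> v \<in> endpoints (w @ [z]) \<Longrightarrow> v \<in> endpoints w \<or> fst v = w"
  using glued_cases[of w "tail R z"] glued_cases[of w "head R z"] by (auto simp: endpoints_snoc)

text \<open>Each vertex is labelled by the edge whose replacement created it, so the label of an endpoint of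
  the edge w is a strict prefix of w. This is what makes vertex bookkeeping possible by word lengths.\<close>
lemma endpoint_label_strict_prefix: "w \<noteq> [] \<Longrightarrow> v \<in> endpoints w \<Longrightarrow> strict_prefix (fst v) w"
proof (induction w arbitrary: v rule: rev_induct)
  case (snoc z w)
  show ?case
  proof (cases "w = []")
    case True
    then show ?thesis
      using snoc.prems by (auto simp: endpoints_def src_single tgt_single strict_prefix_def)
  next
    case False
    then have "strict_prefix (fst v) w \<or> fst v = w"
      using snoc endpoints_snoc_cases by blast
    moreover have "strict_prefix w (w @ [z])" by (simp add: strict_prefix_def)
    ultimately show ?thesis
      using prefix_order.less_trans by auto
  qed
qed simp

lemma endpoint_label_shorter: "w \<noteq> [] \<Longrightarrow> v \<in> endpoints w \<Longrightarrow> length (fst v) < length w"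
  using endpoint_label_strict_prefix prefix_length_less by blast

lemma endpoints_append_cases:
  "w \<noteq> [] \<Longrightarrow> v \<in> endpoints (w @ r) \<Longrightarrow> v \<in> endpoints w \<or> prefix w (fst v)"
proof (induction r arbitrary: v rule: rev_induct)
  case (snoc z r)
  then have "v \<in> endpoints (w @ r) \<or> fst v = w @ r"
    using endpoints_snoc_cases[of "w @ r"] by simp
  then show ?case
  proof
    assume "fst v = w @ r"
    then show ?thesis by simp
  qed (use snoc in blast)
qed simp

lemma endpoints_append_shorter:
  "w \<noteq> [] \<Longrightarrow> v \<in> endpoints (w @ r) \<Longrightarrow> length (fst v) < length w \<Longrightarrow> v \<in> endpoints w"
  using endpoints_append_cases prefix_length_le leD by blast

lemma endpoints_append_common:
  assumes "length p1 = length p2" "p1 \<noteq> p2" "p1 \<noteq> []"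
    and "v \<in> endpoints (p1 @ r1)" "v \<in> endpoints (p2 @ r2)"
  shows "v \<in> endpoints p1 \<and> v \<in> endpoints p2"
proof -
  have p2: "p2 \<noteq> []" using assms by auto
  have "\<not> (prefix p1 (fst v) \<and> prefix p2 (fst v))"
    using prefix_length_prefix[of p1 "fst v" p2] assms(1,2) prefix_length_eq by auto
  moreover have "\<not> (prefix p1 (fst v) \<and> v \<in> endpoints p2)"
    using endpoint_label_shorter[OF p2] prefix_length_le assms(1) by fastforce
  moreover have "\<not> (prefix p2 (fst v) \<and> v \<in> endpoints p1)"
    using endpoint_label_shorter[OF assms(3)] prefix_length_le assms(1) by fastforce
  ultimately show ?thesis
    using endpoints_append_cases[OF assms(3,4)] endpoints_append_cases[OF p2 assms(5)] by blast
qed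

lemma is_loop_iff: "is_loop RS w \<longleftrightarrow> src w = tgt w"
  by (simp add: is_loop_def src_def tgt_def)

lemma src_eq_tgt_snoc_iff:
  assumes "w \<noteq> []" "z \<in> arcs R"
  shows "src (w @ [z]) = tgt (w @ [z]) \<longleftrightarrow> tail R z = head R z"
proof -
  have "length (fst (src w)) < length w" "length (fst (tgt w)) < length w"
    using endpoint_label_shorter[OF assms(1)] by (auto simp: endpoints_def)
  then have "src w \<noteq> (w, x)" "tgt w \<noteq> (w, x)" for x by (metis fst_conv less_irrefl)+
  then show ?thesis
    using ini_ter_not_adjacent[OF assms(2)] ini_neq_ter
    unfolding src_snoc[OF assms(1)] tgt_snoc[OF assms(1)] glued_def
    by (auto split: if_splits dest: sym)
qed

section \<open>The equivalence relation on sequences\<close>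

lemma omrel_iff: "(\<omega>, \<omega>') \<in> omrel RS \<longleftrightarrow> \<omega> \<in> Omega RS \<and> \<omega>' \<in> Omega RS \<and>
   (\<forall>n. endpoints (pref \<omega> n) \<inter> endpoints (pref \<omega>' n) \<noteq> {})"
  unfolding omrel_def ends_def endpoints_def src_def tgt_def by simp

lemma omrel_refl: "\<omega> \<in> Omega RS \<Longrightarrow> (\<omega>, \<omega>) \<in> omrel RS"
  unfolding omrel_iff endpoints_def by auto

lemma omrel_sym: "(\<omega>, \<omega>') \<in> omrel RS \<Longrightarrow> (\<omega>', \<omega>) \<in> omrel RS"
  unfolding omrel_iff by auto

lemma glued_old_vertex: "w \<noteq> [] \<Longrightarrow> glued w r \<in> endpoints w \<Longrightarrow> r = \<iota> \<or> r = \<tau>"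
  using endpoint_label_shorter[of w "glued w r"] unfolding glued_def by (auto split: if_splits)

text \<open>If \<omega>1 ~ \<omega>2 ~ \<omega>3 but the level-n edges of \<omega>1 and \<omega>3 are disjoint, the level-(n+1) edge of \<omega>2
  would join the two distinct endpoints of its parent, i.e. the initial and terminal vertices of R
  would be adjacent.\<close>
lemma omrel_trans:
  assumes "(\<omega>1, \<omega>2) \<in> omrel RS" "(\<omega>2, \<omega>3) \<in> omrel RS"
  shows "(\<omega>1, \<omega>3) \<in> omrel RS"
proof -
  have \<omega>2: "\<omega>2 \<in> Omega RS" using assms omrel_iff by auto
  have c12: "\<And>n. endpoints (pref \<omega>1 n) \<inter> endpoints (pref \<omega>2 n) \<noteq> {}"
    and c23: "\<And>n. endpoints (pref \<omega>2 n) \<inter> endpoints (pref \<omega>3 n) \<noteq> {}"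
    using assms omrel_iff by auto
  have "endpoints (pref \<omega>1 n) \<inter> endpoints (pref \<omega>3 n) \<noteq> {}" for n
  proof
    assume disj: "endpoints (pref \<omega>1 n) \<inter> endpoints (pref \<omega>3 n) = {}"
    have ne12: "pref \<omega>1 n \<noteq> pref \<omega>2 n" and ne23: "pref \<omega>2 n \<noteq> pref \<omega>3 n"
      using disj c12[of n] c23[of n] by auto
    obtain v where v: "v \<in> endpoints (pref \<omega>1 (Suc n))" "v \<in> endpoints (pref \<omega>2 (Suc n))"
      using c12[of "Suc n"] by auto
    obtain v' where v': "v' \<in> endpoints (pref \<omega>2 (Suc n))" "v' \<in> endpoints (pref \<omega>3 (Suc n))"
      using c23[of "Suc n"] by auto
    have vv: "v \<in> endpoints (pref \<omega>2 n)" "v \<in> endpoints (pref \<omega>1 n)"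
      using endpoints_append_common[of "pref \<omega>1 n" "pref \<omega>2 n" v] ne12 v by (auto simp: pref_Suc)
    have vv': "v' \<in> endpoints (pref \<omega>2 n)" "v' \<in> endpoints (pref \<omega>3 n)"
      using endpoints_append_common[of "pref \<omega>2 n" "pref \<omega>3 n" v'] ne23 v' by (auto simp: pref_Suc)
    define z where "z = \<omega>2 (Suc n)"
    have z: "z \<in> arcs R" using \<omega>2 unfolding Omega_def z_def by auto
    have "v \<noteq> v'" using disj vv vv' by auto
    moreover have "v \<in> {glued (pref \<omega>2 n) (tail R z), glued (pref \<omega>2 n) (head R z)}"
      "v' \<in> {glued (pref \<omega>2 n) (tail R z), glued (pref \<omega>2 n) (head R z)}"
      using v(2) v'(1) by (simp_all add: pref_Suc endpoints_snoc z_def)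
    ultimately have "tail R z \<in> {\<iota>, \<tau>}" "head R z \<in> {\<iota>, \<tau>}" "tail R z \<noteq> head R z"
      using glued_old_vertex[of "pref \<omega>2 n"] vv(1) vv'(1) by auto
    then have "{tail R z, head R z} = {\<iota>, \<tau>}" by auto
    then show False using ini_ter_not_adjacent[OF z] by simp
  qed
  then show ?thesis using assms omrel_iff by auto
qed

lemma cls_eq: "(\<omega>, \<omega>') \<in> omrel RS \<Longrightarrow> cls RS \<omega> = cls RS \<omega>'"
  unfolding cls_def using omrel_sym omrel_trans by blast

lemma cls_eqD: "\<omega>' \<in> Omega RS \<Longrightarrow> cls RS \<omega> = cls RS \<omega>' \<Longrightarrow> (\<omega>, \<omega>') \<in> omrel RS"
  using omrel_refl by (auto simp: cls_def)

lemma cls_in_Xsp: "\<omega> \<in> Omega RS \<Longrightarrow> cls RS \<omega> \<in> Xsp RS"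
  unfolding Xsp_def cls_def by (rule quotientI)

lemma valid_word_neq_Nil: "valid_word RS w \<Longrightarrow> w \<noteq> []"
  by (simp add: valid_word_def)

lemma valid_word_snoc: "valid_word RS p \<Longrightarrow> z \<in> arcs R \<Longrightarrow> valid_word RS (p @ [z])"
  unfolding valid_word_def by (cases p) auto

lemma valid_word_append_iff:
  "w \<noteq> [] \<Longrightarrow> valid_word RS (w @ r) \<longleftrightarrow> valid_word RS w \<and> set r \<subseteq> arcs R"
  unfolding valid_word_def by (cases w) auto

lemma Omega_Suc: "\<omega> \<in> Omega RS \<Longrightarrow> 0 < j \<Longrightarrow> \<omega> j \<in> arcs R"
  by (cases j) (simp_all add: Omega_def)

lemma valid_word_pref: "\<omega> \<in> Omega RS \<Longrightarrow> valid_word RS (pref \<omega> n)"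
proof -
  assume \<omega>: "\<omega> \<in> Omega RS"
  have "pref \<omega> n = \<omega> 0 # map \<omega> [1..<Suc n]"
    by (simp add: pref_def upt_conv_Cons del: upt_Suc)
  then show ?thesis
    using \<omega> Omega_Suc[OF \<omega>] by (auto simp: valid_word_def Omega_def)
qed

lemma prepend_in_Omega: "valid_word RS xs \<Longrightarrow> (\<And>i. t i \<in> arcs R) \<Longrightarrow> prepend xs t \<in> Omega RS"
proof -
  assume v: "valid_word RS xs" and t: "\<And>i. t i \<in> arcs R"
  obtain a ys where xs: "xs = a # ys" "a \<in> arcs G0" "set ys \<subseteq> arcs R"
    using v by (cases xs) (auto simp: valid_word_def)
  have "prepend xs t (Suc n) \<in> arcs R" for n
  proof (cases "n < length ys")
    case True
    then show ?thesis using xs nth_mem[of n ys] by (auto simp: prepend_def)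
  qed (use xs t in \<open>simp add: prepend_def\<close>)
  then show ?thesis
    using xs by (simp add: Omega_def prepend_def)
qed

lemma reprefix_in_Omega:
  assumes "\<omega> \<in> Omega RS" "starts_with \<omega> w" "valid_word RS u"
  shows "reprefix w u \<omega> \<in> Omega RS"
  unfolding reprefix_eq_prepend
proof (rule prepend_in_Omega[OF assms(3)])
  fix i
  have "w \<noteq> []" using assms(2) by (simp add: starts_with_def)
  then show "\<omega> (i + length w) \<in> arcs R"
    using Omega_Suc[OF assms(1)] by simp
qed

section \<open>Generic sequences\<close>

text \<open>A generic sequence converges to no vertex, which makes it alone in its equivalence class.\<close>
definition generic :: "(nat \<Rightarrow> 'e) \<Rightarrow> bool" where
  "generic \<omega> \<longleftrightarrow> (\<forall>n. \<exists>m. \<forall>v\<in>endpoints (pref \<omega> m). n < length (fst v))"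

lemma generic_equiv_imp_eq:
  assumes "generic \<omega>" "(\<omega>, \<omega>') \<in> omrel RS"
  shows "\<omega>' = \<omega>"
proof (rule ccontr)
  assume "\<omega>' \<noteq> \<omega>"
  then obtain i where i: "\<omega> i \<noteq> \<omega>' i" by (metis ext)
  obtain m where m: "\<forall>v\<in>endpoints (pref \<omega> m). i < length (fst v)"
    using assms(1) generic_def by blast
  have "src (pref \<omega> m) \<in> endpoints (pref \<omega> m)" by (simp add: endpoints_def)
  then have "i \<le> m"
    using m endpoint_label_shorter[of "pref \<omega> m"] by fastforce
  then obtain r r' where r: "pref \<omega> m = pref \<omega> i @ r" "pref \<omega>' m = pref \<omega>' i @ r'"
    using prefix_pref by (metis prefixE)
  have ne: "pref \<omega> i \<noteq> pref \<omega>' i" using i nth_pref[of i i] by (metis le_refl)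
  obtain v where v: "v \<in> endpoints (pref \<omega> m)" "v \<in> endpoints (pref \<omega>' m)"
    using assms(2) omrel_iff by blast
  have "v \<in> endpoints (pref \<omega> i)"
    using endpoints_append_common[of "pref \<omega> i" "pref \<omega>' i" v r r'] ne v r by simp
  then have "length (fst v) \<le> i"
    using endpoint_label_shorter[of "pref \<omega> i"] by fastforce
  then show False using m v(1) by fastforce
qed

text \<open>Two edges of R which, appended to any edge, push all endpoints to the level of that edge: the
  first one is incident with an internal vertex u of R, the second one with whichever of \<iota>, \<tau> the
  first one may touch (and not with the other one, which is not adjacent to it).\<close>
lemma deepening_pair_ex:
  "\<exists>z1 z2. z1 \<in> arcs R \<and> z2 \<in> arcs R \<and>
     (\<forall>x. x \<noteq> [] \<longrightarrow> (\<forall>v\<in>endpoints (x @ [z1, z2]). length x \<le> length (fst v)))"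
proof -
  obtain u where u: "u \<in> verts R" "u \<noteq> \<iota>" "u \<noteq> \<tau>" using internal_vert_ex by blast
  obtain z1 where z1: "z1 \<in> arcs R" "tail R z1 = u \<or> head R z1 = u"
    using incident_arc_ex[OF u(1)] by blast
  have deep: "length x \<le> length (fst (glued (x @ [z1]) r))"
    if "x \<noteq> []" "r \<noteq> \<tau> \<and> tail R z1 \<notin> {\<iota>, \<tau>} \<or> r \<noteq> \<iota> \<and> head R z1 \<notin> {\<iota>, \<tau>}" for x r
    using that by (auto simp: glued_def src_snoc tgt_snoc)
  show ?thesis
  proof (cases "tail R z1 \<notin> {\<iota>, \<tau>}")
    case True
    obtain z2 where z2: "z2 \<in> arcs R" "tail R z2 = \<iota> \<or> head R z2 = \<iota>"
      using incident_arc_ex[OF ini_in_verts] by blast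
    then have "tail R z2 \<noteq> \<tau>" "head R z2 \<noteq> \<tau>"
      using ini_ter_not_adjacent[OF z2(1)] ini_neq_ter by auto
    then have "length x \<le> length (fst v)" if "x \<noteq> []" "v \<in> endpoints (x @ [z1, z2])" for x v
      using that True deep[of x] endpoints_snoc[of "x @ [z1]" z2] by auto
    then show ?thesis using z1 z2 by blast
  next
    case False
    then have hz: "head R z1 \<notin> {\<iota>, \<tau>}" using z1 u by auto
    obtain z2 where z2: "z2 \<in> arcs R" "tail R z2 = \<tau> \<or> head R z2 = \<tau>"
      using incident_arc_ex[OF ter_in_verts] by blast
    then have "tail R z2 \<noteq> \<iota>" "head R z2 \<noteq> \<iota>"
      using ini_ter_not_adjacent[OF z2(1)] ini_neq_ter by auto
    then have "length x \<le> length (fst v)" if "x \<noteq> []" "v \<in> endpoints (x @ [z1, z2])" for x v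
      using that hz deep[of x] endpoints_snoc[of "x @ [z1]" z2] by auto
    then show ?thesis using z1 z2 by blast
  qed
qed

definition deepening_pair :: "'e \<times> 'e" where
  "deepening_pair = (SOME p. fst p \<in> arcs R \<and> snd p \<in> arcs R \<and>
     (\<forall>x. x \<noteq> [] \<longrightarrow> (\<forall>v\<in>endpoints (x @ [fst p, snd p]). length x \<le> length (fst v))))"

lemma deepening_pair:
  "fst deepening_pair \<in> arcs R" "snd deepening_pair \<in> arcs R"
  "\<And>x v. x \<noteq> [] \<Longrightarrow> v \<in> endpoints (x @ [fst deepening_pair, snd deepening_pair]) \<Longrightarrow>
     length x \<le> length (fst v)"
proof -
  have "\<exists>p. fst p \<in> arcs R \<and> snd p \<in> arcs R \<and>
     (\<forall>x. x \<noteq> [] \<longrightarrow> (\<forall>v\<in>endpoints (x @ [fst p, snd p]). length x \<le> length (fst v)))"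
    using deepening_pair_ex by auto
  from someI_ex[OF this] show "fst deepening_pair \<in> arcs R" "snd deepening_pair \<in> arcs R"
    "\<And>x v. x \<noteq> [] \<Longrightarrow> v \<in> endpoints (x @ [fst deepening_pair, snd deepening_pair]) \<Longrightarrow>
     length x \<le> length (fst v)"
    unfolding deepening_pair_def by blast+
qed

definition deepening_seq :: "nat \<Rightarrow> 'e" where
  "deepening_seq i = (if even i then fst deepening_pair else snd deepening_pair)"

lemma generic_prepend_deepening_seq: assumes "y \<noteq> []" shows "generic (prepend y deepening_seq)"
  unfolding generic_def
proof
  fix n
  define \<omega> where "\<omega> = prepend y deepening_seq"
  define k where "k = length y + 2 * n"
  have k: "k = Suc (k - 1)" "n < k" using assms by (cases y; simp add: k_def)+
  define x where "x = pref \<omega> (k - 1)"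
  have "pref \<omega> (Suc k) = x @ [\<omega> k, \<omega> (Suc k)]"
    using pref_Suc[of \<omega> "k - 1"] k(1) by (simp add: x_def pref_Suc)
  also have "\<dots> = x @ [fst deepening_pair, snd deepening_pair]"
    by (simp add: \<omega>_def prepend_def k_def deepening_seq_def)
  finally have "\<forall>v\<in>endpoints (pref \<omega> (Suc k)). n < length (fst v)"
    using deepening_pair(3)[of x] k by (fastforce simp: x_def)
  then show "\<exists>m. \<forall>v\<in>endpoints (pref (prepend y deepening_seq) m). n < length (fst v)"
    unfolding \<omega>_def by blast
qed

definition other_arc :: 'e where
  "other_arc = (SOME c. c \<in> arcs R \<and> c \<noteq> fst deepening_pair)"

lemma other_arc: "other_arc \<in> arcs R" "other_arc \<noteq> fst deepening_pair"
proof -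
  have "\<not> arcs R \<subseteq> {fst deepening_pair}"
    using card_mono[of "{fst deepening_pair}" "arcs R"] two_le_card_arcs by auto
  then have "\<exists>c. c \<in> arcs R \<and> c \<noteq> fst deepening_pair" by auto
  from someI_ex[OF this] show "other_arc \<in> arcs R" "other_arc \<noteq> fst deepening_pair"
    unfolding other_arc_def by blast+
qed

text \<open>A generic sequence starting with w; the padding d by copies of other_arc allows to separate
  the generic sequences starting with words of different lengths.\<close>
definition generic_seq :: "'e list \<Rightarrow> nat \<Rightarrow> nat \<Rightarrow> 'e" where
  "generic_seq w d = prepend w (prepend (replicate d other_arc) deepening_seq)"

lemma generic_generic_seq: "w \<noteq> [] \<Longrightarrow> generic (generic_seq w d)"
  unfolding generic_seq_def prepend_prepend by (rule generic_prepend_deepening_seq) simp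

lemma generic_seq_in_Omega: "valid_word RS w \<Longrightarrow> generic_seq w d \<in> Omega RS"
  unfolding generic_seq_def
  by (rule prepend_in_Omega) (auto simp: prepend_def deepening_seq_def deepening_pair other_arc)

lemma starts_with_generic_seq: "w \<noteq> [] \<Longrightarrow> starts_with (generic_seq w d) w"
  unfolding generic_seq_def by (rule starts_with_prepend)

lemma reprefix_generic_seq: "length w = length w' \<Longrightarrow> reprefix w u (generic_seq w' d) = generic_seq u d"
  unfolding generic_seq_def by (rule reprefix_prepend)

lemma generic_seq_neq:
  assumes "length u < length u'"
  shows "generic_seq u (length u' - length u) \<noteq> generic_seq u' (length u' - length u)"
proof -
  have "generic_seq u (length u' - length u) (length u') = fst deepening_pair"
    using assms by (simp add: generic_seq_def prepend_def deepening_seq_def)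
  moreover have "generic_seq u' (length u' - length u) (length u') = other_arc"
    using assms by (simp add: generic_seq_def prepend_def)
  ultimately show ?thesis using other_arc(2) by metis
qed

section \<open>Sequences converging to a vertex\<close>

definition incident_arc :: "'v \<Rightarrow> 'e" where
  "incident_arc r = (SOME z. z \<in> arcs R \<and> (tail R z = r \<or> head R z = r))"

lemma incident_arc:
  "r \<in> verts R \<Longrightarrow> incident_arc r \<in> arcs R \<and> (tail R (incident_arc r) = r \<or> head R (incident_arc r) = r)"
  unfolding incident_arc_def by (rule someI_ex) (use incident_arc_ex in blast)

text \<open>Starting at the corner r \<in> {\<iota>, \<tau>} of an edge, always follow an edge of R incident with the current
  corner; the corner of the new edge that is glued onto the old corner is hug_vert r (k+1).\<close>
primrec hug_vert :: "'v \<Rightarrow> nat \<Rightarrow> 'v" where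
  "hug_vert r 0 = r"
| "hug_vert r (Suc k) = (if tail R (incident_arc (hug_vert r k)) = hug_vert r k then \<iota> else \<tau>)"

definition hugging :: "'v \<Rightarrow> nat \<Rightarrow> 'e" where
  "hugging r k = incident_arc (hug_vert r k)"

lemma hug_vert_corner: "r \<in> {\<iota>, \<tau>} \<Longrightarrow> hug_vert r k \<in> {\<iota>, \<tau>}"
  by (induction k) auto

lemma hugging_in_arcs: "r \<in> {\<iota>, \<tau>} \<Longrightarrow> hugging r k \<in> arcs R"
  using hug_vert_corner[of r k] incident_arc ini_in_verts ter_in_verts unfolding hugging_def by auto

lemma glued_in_endpoints: "r \<in> {\<iota>, \<tau>} \<Longrightarrow> glued x r \<in> endpoints x"
  using ini_neq_ter by (auto simp: glued_def endpoints_def)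

lemma hugging_step:
  assumes r: "r \<in> {\<iota>, \<tau>}" and x: "x \<noteq> []"
  defines "z \<equiv> incident_arc r"
  shows "glued (x @ [z]) (if tail R z = r then \<iota> else \<tau>) = glued x r"
    and "\<forall>v\<in>endpoints (x @ [z]). v = glued x r \<or> fst v = x"
proof -
  have z: "z \<in> arcs R" "tail R z = r \<or> head R z = r"
    using incident_arc[of r] r ini_in_verts ter_in_verts by (auto simp: z_def)
  have na: "{tail R z, head R z} \<noteq> {\<iota>, \<tau>}" using ini_ter_not_adjacent[OF z(1)] .
  show "glued (x @ [z]) (if tail R z = r then \<iota> else \<tau>) = glued x r"
    using z(2) by (auto simp: glued_ini glued_ter src_snoc[OF x] tgt_snoc[OF x])
  have "tail R z = r \<or> tail R z \<notin> {\<iota>, \<tau>}" "head R z = r \<or> head R z \<notin> {\<iota>, \<tau>}"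
    using na z(2) r by auto
  then show "\<forall>v\<in>endpoints (x @ [z]). v = glued x r \<or> fst v = x"
    by (auto simp: endpoints_snoc[OF x] glued_def)
qed

lemma glued_hugging_prefix:
  assumes r: "r \<in> {\<iota>, \<tau>}" and x: "x \<noteq> []"
  shows "glued (x @ map (hugging r) [0..<k]) (hug_vert r k) = glued x r"
proof (induction k)
  case (Suc k)
  have "x @ map (hugging r) [0..<Suc k] = (x @ map (hugging r) [0..<k]) @ [incident_arc (hug_vert r k)]"
    by (simp add: hugging_def)
  then show ?case
    using hugging_step(1)[OF hug_vert_corner[OF r, of k], of "x @ map (hugging r) [0..<k]"] x Suc.IH
    by simp
qed simp

lemma endpoints_hugging_prefix:
  assumes r: "r \<in> {\<iota>, \<tau>}" and x: "x \<noteq> []"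
  shows "\<forall>v\<in>endpoints (x @ map (hugging r) [0..<Suc k]). v = glued x r \<or> fst v = x @ map (hugging r) [0..<k]"
proof -
  have "x @ map (hugging r) [0..<Suc k] = (x @ map (hugging r) [0..<k]) @ [incident_arc (hug_vert r k)]"
    by (simp add: hugging_def)
  then show ?thesis
    using hugging_step(2)[OF hug_vert_corner[OF r, of k], of "x @ map (hugging r) [0..<k]"] x
      glued_hugging_prefix[OF r x, of k]
    by simp
qed

lemma prepend_hugging_in_Omega: "valid_word RS x \<Longrightarrow> r \<in> {\<iota>, \<tau>} \<Longrightarrow> prepend x (hugging r) \<in> Omega RS"
  by (rule prepend_in_Omega) (auto simp: hugging_in_arcs)

lemma glued_in_endpoints_hugging:
  assumes x: "valid_word RS x" and r: "r \<in> {\<iota>, \<tau>}" and n: "length (fst (glued x r)) \<le> n"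
  shows "glued x r \<in> endpoints (pref (prepend x (hugging r)) n)"
proof (cases "n < length x - 1")
  case True
  have x0: "x \<noteq> []" using x by (rule valid_word_neq_Nil)
  have "glued x r \<in> endpoints (take (Suc n) x)"
    by (rule endpoints_append_shorter[of _ _ "drop (Suc n) x"]) (use x0 n True glued_in_endpoints[OF r] in auto)
  then show ?thesis
    using pref_prepend_short[of n x] True by simp
next
  case False
  then have "pref (prepend x (hugging r)) n = x @ map (hugging r) [0..<n - (length x - 1)]"
    using pref_prepend[OF valid_word_neq_Nil[OF x], of "hugging r" "n - (length x - 1)"] by simp
  then show ?thesis
    using glued_hugging_prefix[OF r valid_word_neq_Nil[OF x]] glued_in_endpoints[OF hug_vert_corner[OF r]]
    by metis
qed

lemma glued_eq_imp_hugging_equiv: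
  assumes x: "valid_word RS x" and y: "valid_word RS y" and r: "r \<in> {\<iota>, \<tau>}" and s: "s \<in> {\<iota>, \<tau>}"
    and e: "glued x r = glued y s"
  shows "(prepend x (hugging r), prepend y (hugging s)) \<in> omrel RS"
proof -
  define a where "a = glued x r"
  have lx: "strict_prefix (fst a) x"
    using endpoint_label_strict_prefix[OF valid_word_neq_Nil[OF x] glued_in_endpoints[OF r]] a_def by simp
  have ly: "strict_prefix (fst a) y"
    using endpoint_label_strict_prefix[OF valid_word_neq_Nil[OF y] glued_in_endpoints[OF s]] a_def e by simp
  have "endpoints (pref (prepend x (hugging r)) n) \<inter> endpoints (pref (prepend y (hugging s)) n) \<noteq> {}" for n
  proof (cases "n < length (fst a)")
    case True
    have "pref (prepend x (hugging r)) n = pref (prepend y (hugging s)) n"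
    proof (rule nth_equalityI)
      fix i assume "i < length (pref (prepend x (hugging r)) n)"
      then have i: "i \<le> n" "i < length (fst a)" using True by simp_all
      then have "x ! i = fst a ! i" "y ! i = fst a ! i" "i < length x" "i < length y"
        using lx ly prefix_length_less by (fastforce simp: strict_prefix_def prefix_def nth_append)+
      then show "pref (prepend x (hugging r)) n ! i = pref (prepend y (hugging s)) n ! i"
        using i True by (simp add: nth_pref prepend_def)
    qed simp
    then show ?thesis by (simp add: endpoints_def)
  next
    case False
    then have "a \<in> endpoints (pref (prepend x (hugging r)) n)" "a \<in> endpoints (pref (prepend y (hugging s)) n)"
      using glued_in_endpoints_hugging[OF x r, of n] glued_in_endpoints_hugging[OF y s, of n] a_def e by auto
    then show ?thesis by blast
  qed
  then show ?thesis
    using omrel_iff prepend_hugging_in_Omega[OF x r] prepend_hugging_in_Omega[OF y s] by blast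
qed

text \<open>Past the level of both vertices, the edges of the two sequences either share only one of these
  vertices or are equal, and both cases are ruled out one level further down.\<close>
lemma hugging_equiv_imp_glued_eq:
  assumes x: "x \<noteq> []" and y: "y \<noteq> []" and r: "r \<in> {\<iota>, \<tau>}" and s: "s \<in> {\<iota>, \<tau>}"
    and rel: "(prepend x (hugging r), prepend y (hugging s)) \<in> omrel RS"
  shows "glued x r = glued y s"
proof (rule ccontr)
  assume ne: "glued x r \<noteq> glued y s"
  define n where "n = max (length x) (length y)"
  define kx where "kx = n - length x"
  define ky where "ky = n - length y"
  have lx: "length (fst (glued x r)) < length x" and ly: "length (fst (glued y s)) < length y"
    using endpoint_label_shorter[OF x glued_in_endpoints[OF r]]
      endpoint_label_shorter[OF y glued_in_endpoints[OF s]] .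
  define X where "X = x @ map (hugging r) [0..<Suc kx]"
  define Y where "Y = y @ map (hugging s) [0..<Suc ky]"
  have lX: "length X = Suc n" and lY: "length Y = Suc n"
    by (simp_all add: X_def Y_def kx_def ky_def n_def)
  have "Suc n = length x - 1 + Suc (Suc kx)" using x by (cases x) (simp_all add: kx_def n_def)
  then have px: "pref (prepend x (hugging r)) (Suc n) = X @ [hugging r (Suc kx)]"
    unfolding X_def by (simp only: pref_prepend[OF x]) simp
  have "Suc n = length y - 1 + Suc (Suc ky)" using y by (cases y) (simp_all add: ky_def n_def)
  then have py: "pref (prepend y (hugging s)) (Suc n) = Y @ [hugging s (Suc ky)]"
    unfolding Y_def by (simp only: pref_prepend[OF y]) simp
  obtain v where v: "v \<in> endpoints (X @ [hugging r (Suc kx)])" "v \<in> endpoints (Y @ [hugging s (Suc ky)])"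
    using rel px py unfolding omrel_iff by (metis disjoint_iff)
  have v1: "v = glued x r \<or> fst v = X" and v2: "v = glued y s \<or> fst v = Y"
    using endpoints_hugging_prefix[OF r x, of "Suc kx"] endpoints_hugging_prefix[OF s y, of "Suc ky"] v
    by (simp_all add: X_def Y_def)
  then have "X = Y"
    using ne lx ly lX lY by (auto simp: n_def)
  have "glued y s \<in> endpoints X"
    using glued_hugging_prefix[OF s y, of "Suc ky"] glued_in_endpoints[OF hug_vert_corner[OF s]]
    unfolding \<open>X = Y\<close> Y_def by metis
  then have "glued y s = glued x r \<or> fst (glued y s) = x @ map (hugging r) [0..<kx]"
    using endpoints_hugging_prefix[OF r x, of kx] by (simp add: X_def)
  then show False
    using ne ly by (auto simp: kx_def n_def)
qed

section \<open>Canonical maps between cells\<close>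

definition canon :: "((nat \<Rightarrow> 'e) set \<Rightarrow> (nat \<Rightarrow> 'e) set) \<Rightarrow> 'e list \<Rightarrow> 'e list \<Rightarrow> bool" where
  "canon f w u \<longleftrightarrow> valid_word RS w \<and> valid_word RS u \<and> canonical_on RS f w u"

lemma canon_iff:
  "canon f w u \<longleftrightarrow> valid_word RS w \<and> valid_word RS u \<and> (src w = tgt w \<longleftrightarrow> src u = tgt u) \<and>
     (\<forall>\<omega>\<in>Omega RS. starts_with \<omega> w \<longrightarrow> f (cls RS \<omega>) = cls RS (reprefix w u \<omega>))"
proof (cases "valid_word RS w")
  case True
  show ?thesis
    unfolding canon_def canonical_on_def is_loop_iff pref_eq_iff_starts_with[OF valid_word_neq_Nil[OF True]]
    using True by blast
qed (simp add: canon_def)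

lemma canonI:
  assumes "valid_word RS w" "valid_word RS u" "src w = tgt w \<longleftrightarrow> src u = tgt u"
    and "\<And>\<omega>. \<omega> \<in> Omega RS \<Longrightarrow> starts_with \<omega> w \<Longrightarrow> f (cls RS \<omega>) = cls RS (reprefix w u \<omega>)"
  shows "canon f w u"
  using assms canon_iff by blast

lemma canonD:
  assumes "canon f w u"
  shows "valid_word RS w" "valid_word RS u" "src w = tgt w \<longleftrightarrow> src u = tgt u"
    and "\<And>\<omega>. \<omega> \<in> Omega RS \<Longrightarrow> starts_with \<omega> w \<Longrightarrow> f (cls RS \<omega>) = cls RS (reprefix w u \<omega>)"
  using assms canon_iff by blast+

lemma src_eq_tgt_append_iff:
  assumes "valid_word RS (w @ r)" "valid_word RS (u @ r)" "w \<noteq> []" "u \<noteq> []"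
    and "src w = tgt w \<longleftrightarrow> src u = tgt u"
  shows "src (w @ r) = tgt (w @ r) \<longleftrightarrow> src (u @ r) = tgt (u @ r)"
proof (cases r rule: rev_cases)
  case (snoc r' z)
  then have "z \<in> arcs R" using assms(1,3) valid_word_append_iff by auto
  then show ?thesis
    using src_eq_tgt_snoc_iff[of "w @ r'" z] src_eq_tgt_snoc_iff[of "u @ r'" z] assms(3,4) snoc by simp
qed (use assms in simp)

lemma canon_append:
  assumes c: "canon f w u" and v: "valid_word RS (w @ r)"
  shows "canon f (w @ r) (u @ r)"
proof (rule canonI)
  have w: "w \<noteq> []" "u \<noteq> []" using canonD(1,2)[OF c] valid_word_neq_Nil by auto
  show vu: "valid_word RS (u @ r)"
    using v canonD(2)[OF c] valid_word_append_iff w by auto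
  show "src (w @ r) = tgt (w @ r) \<longleftrightarrow> src (u @ r) = tgt (u @ r)"
    using src_eq_tgt_append_iff[OF v vu w canonD(3)[OF c]] .
  fix \<omega> assume \<omega>: "\<omega> \<in> Omega RS" "starts_with \<omega> (w @ r)"
  have "starts_with \<omega> w" using starts_with_prefix[OF \<omega>(2) _ w(1)] by simp
  then show "f (cls RS \<omega>) = cls RS (reprefix (w @ r) (u @ r) \<omega>)"
    using canonD(4)[OF c \<omega>(1)] reprefix_append[OF \<omega>(2)] by simp
qed (rule v)

lemma canon_comp:
  assumes g: "canon g w u" and f: "canon f u v" and h: "\<And>p. p \<in> Xsp RS \<Longrightarrow> h p = f (g p)"
  shows "canon h w v"
proof (rule canonI)
  show "valid_word RS w" "valid_word RS v" using canonD(1)[OF g] canonD(2)[OF f] .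
  show "src w = tgt w \<longleftrightarrow> src v = tgt v" using canonD(3)[OF g] canonD(3)[OF f] by simp
  fix \<omega> assume \<omega>: "\<omega> \<in> Omega RS" "starts_with \<omega> w"
  have u: "valid_word RS u" using canonD(2)[OF g] .
  have "h (cls RS \<omega>) = f (cls RS (reprefix w u \<omega>))"
    using h cls_in_Xsp[OF \<omega>(1)] canonD(4)[OF g \<omega>] by simp
  also have "\<dots> = cls RS (reprefix w v \<omega>)"
    using canonD(4)[OF f reprefix_in_Omega[OF \<omega> u] starts_with_reprefix[OF valid_word_neq_Nil[OF u]]]
    by (simp add: reprefix_reprefix)
  finally show "h (cls RS \<omega>) = cls RS (reprefix w v \<omega>)" .
qed

lemma canon_inv:
  assumes f: "canon f w u" and g: "\<And>p. p \<in> Xsp RS \<Longrightarrow> g (f p) = p"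
  shows "canon g u w"
proof (rule canonI)
  show "valid_word RS u" "valid_word RS w" using canonD(1,2)[OF f] by auto
  show "src u = tgt u \<longleftrightarrow> src w = tgt w" using canonD(3)[OF f] by simp
  fix \<omega>' assume \<omega>': "\<omega>' \<in> Omega RS" "starts_with \<omega>' u"
  define \<omega> where "\<omega> = reprefix u w \<omega>'"
  have \<omega>: "\<omega> \<in> Omega RS" "starts_with \<omega> w"
    using reprefix_in_Omega[OF \<omega>' canonD(1)[OF f]] starts_with_reprefix[OF valid_word_neq_Nil[OF canonD(1)[OF f]]]
    by (simp_all add: \<omega>_def)
  have "reprefix w u \<omega> = \<omega>'"
    unfolding \<omega>_def reprefix_reprefix using reprefix_self[OF \<omega>'(2)] .
  then have "g (cls RS \<omega>') = g (f (cls RS \<omega>))" using canonD(4)[OF f \<omega>] by simp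
  also have "\<dots> = cls RS \<omega>" using g cls_in_Xsp[OF \<omega>(1)] by simp
  finally show "g (cls RS \<omega>') = cls RS (reprefix u w \<omega>')" unfolding \<omega>_def .
qed

lemma canon_id:
  assumes "valid_word RS w" "\<And>p. p \<in> Xsp RS \<Longrightarrow> g p = p"
  shows "canon g w w"
  using assms by (intro canonI) (simp_all add: cls_in_Xsp reprefix_self)

text \<open>Canonical images are unique, since a generic sequence is the only representative of its point.\<close>
lemma canon_unique:
  assumes f1: "canon f w u" and f2: "canon f w u'"
  shows "u = u'"
proof -
  have w: "w \<noteq> []" and u: "u \<noteq> []"
    using canonD(1,2)[OF f1] valid_word_neq_Nil by auto
  have eq: "generic_seq u d = generic_seq u' d" for d
  proof -
    have \<omega>: "generic_seq w d \<in> Omega RS" "starts_with (generic_seq w d) w"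
      using generic_seq_in_Omega[OF canonD(1)[OF f1]] starts_with_generic_seq[OF w] by auto
    have "cls RS (generic_seq u d) = cls RS (generic_seq u' d)"
      using canonD(4)[OF f1 \<omega>] canonD(4)[OF f2 \<omega>] reprefix_generic_seq[of w w] by simp
    then have "(generic_seq u d, generic_seq u' d) \<in> omrel RS"
      using cls_eqD generic_seq_in_Omega[OF canonD(2)[OF f2]] by blast
    then show ?thesis
      by (rule generic_equiv_imp_eq[OF generic_generic_seq[OF u], THEN sym])
  qed
  show ?thesis
  proof (cases "length u = length u'")
    case True
    then show ?thesis
    proof (rule nth_equalityI)
      fix i assume "i < length u"
      then show "u ! i = u' ! i"
        using fun_cong[OF eq[of 0], of i] True by (simp add: generic_seq_def prepend_def)
    qed
  next
    case False
    then show ?thesis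
      using generic_seq_neq[of u u'] generic_seq_neq[of u' u] eq by (metis linorder_neqE_nat)
  qed
qed

definition canon_image :: "((nat \<Rightarrow> 'e) set \<Rightarrow> (nat \<Rightarrow> 'e) set) \<Rightarrow> 'e list \<Rightarrow> 'e list" where
  "canon_image f w = (THE u. canon f w u)"

lemma canon_image_eq: "canon f w u \<Longrightarrow> canon_image f w = u"
  unfolding canon_image_def using canon_unique by blast

text \<open>Canonical maps respect vertices: the point to which a hugging sequence converges is sent to the
  point to which the image hugging sequence converges.\<close>
lemma canon_glued:
  assumes fx: "canon f x u" and fy: "canon f y u'" and r: "r \<in> {\<iota>, \<tau>}" and s: "s \<in> {\<iota>, \<tau>}"
    and e: "glued x r = glued y s"
  shows "glued u r = glued u' s"
proof -
  note x = canonD(1,2)[OF fx] and y = canonD(1,2)[OF fy]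
  have "cls RS (prepend x (hugging r)) = cls RS (prepend y (hugging s))"
    using cls_eq[OF glued_eq_imp_hugging_equiv[OF x(1) y(1) r s e]] .
  moreover have "f (cls RS (prepend x (hugging r))) = cls RS (prepend u (hugging r))"
    using canonD(4)[OF fx prepend_hugging_in_Omega[OF x(1) r] starts_with_prepend[OF valid_word_neq_Nil[OF x(1)]]]
      reprefix_prepend[of x x] by simp
  moreover have "f (cls RS (prepend y (hugging s))) = cls RS (prepend u' (hugging s))"
    using canonD(4)[OF fy prepend_hugging_in_Omega[OF y(1) s] starts_with_prepend[OF valid_word_neq_Nil[OF y(1)]]]
      reprefix_prepend[of y y] by simp
  ultimately have "cls RS (prepend u (hugging r)) = cls RS (prepend u' (hugging s))"
    by simp
  then have "(prepend u (hugging r), prepend u' (hugging s)) \<in> omrel RS"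
    by (rule cls_eqD[OF prepend_hugging_in_Omega[OF y(2) s]])
  then show ?thesis
    using hugging_equiv_imp_glued_eq[OF valid_word_neq_Nil[OF x(2)] valid_word_neq_Nil[OF y(2)] r s] by blast
qed

text \<open>A rearrangement is canonical on every edge longer than all the cells of a defining cover:
  such an edge lies in a single cell of the cover, as its generic sequence does.\<close>
lemma rearrangement_canon_deep:
  assumes "rearrangement RS f"
  shows "\<exists>N. \<forall>y. valid_word RS y \<and> N \<le> length y \<longrightarrow> (\<exists>u. canon f y u)"
proof -
  obtain S where S: "finite S" "\<forall>w\<in>S. valid_word RS w" "\<Union>(cell RS ` S) = Xsp RS"
    "\<forall>w\<in>S. \<exists>w'. valid_word RS w' \<and> canonical_on RS f w w'"
    using assms unfolding rearrangement_def by (elim conjE exE) blast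
  have "\<exists>u. canon f y u" if y: "valid_word RS y" "(\<Sum>w\<in>S. length w) \<le> length y" for y
  proof -
    define \<omega> where "\<omega> = generic_seq y 0"
    have \<omega>: "\<omega> \<in> Omega RS" "starts_with \<omega> y"
      using generic_seq_in_Omega[OF y(1)] starts_with_generic_seq[OF valid_word_neq_Nil[OF y(1)]]
      by (auto simp: \<omega>_def)
    obtain w where w: "w \<in> S" "cls RS \<omega> \<in> cell RS w"
      using S(3) cls_in_Xsp[OF \<omega>(1)] by blast
    then obtain \<omega>' where \<omega>': "\<omega>' \<in> Omega RS" "pref \<omega>' (length w - 1) = w" "cls RS \<omega> = cls RS \<omega>'"
      unfolding cell_def by auto
    have "generic \<omega>"
      using generic_generic_seq[OF valid_word_neq_Nil[OF y(1)]] by (simp add: \<omega>_def)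
    then have "\<omega>' = \<omega>"
      using generic_equiv_imp_eq cls_eqD[OF \<omega>'(1,3)] by blast
    then have sw: "starts_with \<omega> w"
      using \<omega>'(2) pref_eq_iff_starts_with[OF valid_word_neq_Nil] S(2) w(1) by blast
    have "length w \<le> length y"
      using member_le_sum[OF w(1) _ S(1), of length] y(2) by simp
    moreover have "prefix w y \<or> prefix y w"
      using starts_with_prefix_cases[OF sw \<omega>(2)] .
    ultimately have "prefix w y"
      using prefix_length_le prefix_length_eq by (metis le_antisym)
    then obtain r where r: "y = w @ r" by (auto simp: prefix_def)
    obtain w' where "valid_word RS w'" "canonical_on RS f w w'" using S(4) w(1) by blast
    then have "canon f w w'" using S(2) w(1) by (simp add: canon_def)
    then show ?thesis using canon_append y(1) r by blast
  qed
  then show ?thesis by blast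
qed

section \<open>Cuts are the edge sets of expansions\<close>

text \<open>A cut is a finite set of edges whose cells cover X with disjoint interiors, described combinatorially.\<close>
definition is_cut :: "'e list set \<Rightarrow> bool" where
  "is_cut C \<longleftrightarrow> finite C \<and> (\<forall>w\<in>C. valid_word RS w) \<and> (\<forall>\<omega>\<in>Omega RS. \<exists>w\<in>C. starts_with \<omega> w) \<and>
     (\<forall>w\<in>C. \<forall>w'\<in>C. prefix w w' \<longrightarrow> w = w')"

definition realizes :: "('v,'e) xgraph \<Rightarrow> 'e list set \<Rightarrow> bool" where
  "realizes E C \<longleftrightarrow> E \<in> expansions RS \<and> arcs E = C \<and> (\<forall>x\<in>C. tail E x = src x \<and> head E x = tgt x) \<and>
     verts E = src ` C \<union> tgt ` C"

lemma is_cut_starts_with_prefix: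
  assumes C: "is_cut C" and w: "valid_word RS w"
  obtains c where "c \<in> C" "prefix c w \<or> prefix w c"
proof -
  obtain c where "c \<in> C" "starts_with (generic_seq w 0) c"
    using C generic_seq_in_Omega[OF w] unfolding is_cut_def by blast
  then show ?thesis
    using that starts_with_prefix_cases[OF starts_with_generic_seq[OF valid_word_neq_Nil[OF w]]] by blast
qed

lemma realizes_lift0:
  assumes C: "is_cut C" and len: "\<forall>w\<in>C. length w = 1"
  shows "realizes (lift0 RS) C"
proof -
  have "w \<in> (\<lambda>a. [a]) ` arcs G0" if "w \<in> C" for w
  proof -
    have "valid_word RS w" "length w = 1" using C len that by (auto simp: is_cut_def)
    then show ?thesis by (cases w) (auto simp: valid_word_def)
  qed
  moreover have "[a] \<in> C" if a: "a \<in> arcs G0" for a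
  proof -
    obtain c where "c \<in> C" "prefix c [a] \<or> prefix [a] c"
      using is_cut_starts_with_prefix[OF C, of "[a]"] a by (auto simp: valid_word_def)
    moreover have "length c = length [a]" using \<open>c \<in> C\<close> len by simp
    ultimately show ?thesis
      using prefix_length_eq by metis
  qed
  ultimately have CC: "C = (\<lambda>a. [a]) ` arcs G0" by blast
  have vb: "verts G0 = tail G0 ` arcs G0 \<union> head G0 ` arcs G0"
    using base_no_isolated wf_base unfolding no_isolated_def wf_graph_def by auto
  show ?thesis
    unfolding realizes_def
  proof (intro conjI ballI)
    show "lift0 RS \<in> expansions RS" by (rule expansions.base_exp)
    show "arcs (lift0 RS) = C" using CC by (simp add: lift0_def)
    show "verts (lift0 RS) = src ` C \<union> tgt ` C"
      unfolding CC by (auto simp: lift0_def src_single tgt_single vb image_iff)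
    fix x assume "x \<in> C"
    then obtain a where "x = [a]" using CC by auto
    then show "tail (lift0 RS) x = src x" "head (lift0 RS) x = tgt x"
      by (simp_all add: lift0_def src_single tgt_single)
  qed
qed

lemma realizes_replace:
  assumes E: "realizes E C" and p: "p \<in> C" "p \<noteq> []" and new: "\<forall>z\<in>arcs R. p @ [z] \<notin> C"
  defines "S \<equiv> (\<lambda>z. p @ [z]) ` arcs R"
  shows "realizes (replace RS E p) (C - {p} \<union> S)"
proof -
  have E1: "E \<in> expansions RS" "arcs E = C" "\<And>x. x \<in> C \<Longrightarrow> tail E x = src x \<and> head E x = tgt x"
    "verts E = src ` C \<union> tgt ` C" using E unfolding realizes_def by auto
  have glued_eq: "vmap RS E p r = glued p r" for r
    using E1(3)[OF p(1)] by (simp add: vmap_def glued_def)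
  have SC: "S \<inter> C = {}" using new by (auto simp: S_def)
  have ends: "tail (replace RS E p) x = src x \<and> head (replace RS E p) x = tgt x" if "x \<in> C - {p} \<union> S" for x
  proof (cases "x \<in> S")
    case True
    then show ?thesis
      using glued_eq by (auto simp: replace_def S_def src_snoc[OF p(2)] tgt_snoc[OF p(2)])
  next
    case False
    then show ?thesis
      using that E1(3) by (simp add: replace_def S_def[symmetric])
  qed
  have incident: "glued p r \<in> src ` S \<union> tgt ` S" if r: "r \<in> verts R" for r
  proof -
    obtain z where z: "z \<in> arcs R" "tail R z = r \<or> head R z = r"
      using incident_arc_ex[OF r] by blast
    then have "src (p @ [z]) = glued p r \<or> tgt (p @ [z]) = glued p r"
      by (auto simp: src_snoc[OF p(2)] tgt_snoc[OF p(2)])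
    moreover have "src (p @ [z]) \<in> src ` S" "tgt (p @ [z]) \<in> tgt ` S"
      using z(1) by (simp_all add: S_def)
    ultimately show ?thesis by auto
  qed
  have old: "src p \<in> src ` S \<union> tgt ` S" "tgt p \<in> src ` S \<union> tgt ` S"
    using incident[OF ini_in_verts] incident[OF ter_in_verts] by (simp_all add: glued_ini glued_ter)
  have new_vert: "(p, u) \<in> src ` S \<union> tgt ` S" if "u \<in> verts R" "u \<noteq> \<iota>" "u \<noteq> \<tau>" for u
    using incident[OF that(1)] that by (simp add: glued_def)
  have new_ends: "src s \<in> {src p, tgt p} \<union> (\<lambda>u. (p, u)) ` (verts R - {\<iota>, \<tau>}) \<and>
                  tgt s \<in> {src p, tgt p} \<union> (\<lambda>u. (p, u)) ` (verts R - {\<iota>, \<tau>})" if "s \<in> S" for s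
    using that tail_rep_in_verts head_rep_in_verts
    by (auto simp: S_def src_snoc[OF p(2)] tgt_snoc[OF p(2)] glued_def)
  have "verts (replace RS E p) = src ` C \<union> tgt ` C \<union> (\<lambda>u. (p, u)) ` (verts R - {\<iota>, \<tau>})"
    using E1(4) by (simp add: replace_def)
  also have "\<dots> = src ` (C - {p} \<union> S) \<union> tgt ` (C - {p} \<union> S)"
  proof
    show "src ` C \<union> tgt ` C \<union> (\<lambda>u. (p, u)) ` (verts R - {\<iota>, \<tau>}) \<subseteq> src ` (C - {p} \<union> S) \<union> tgt ` (C - {p} \<union> S)"
      using old new_vert by (auto simp: image_Un)
    have "src ` S \<union> tgt ` S \<subseteq> src ` C \<union> tgt ` C \<union> (\<lambda>u. (p, u)) ` (verts R - {\<iota>, \<tau>})"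
    proof
      fix v assume "v \<in> src ` S \<union> tgt ` S"
      then obtain s where "s \<in> S" "v = src s \<or> v = tgt s" by blast
      then have "v \<in> {src p, tgt p} \<union> (\<lambda>u. (p, u)) ` (verts R - {\<iota>, \<tau>})" using new_ends by blast
      moreover have "{src p, tgt p} \<subseteq> src ` C \<union> tgt ` C" using p(1) by auto
      ultimately show "v \<in> src ` C \<union> tgt ` C \<union> (\<lambda>u. (p, u)) ` (verts R - {\<iota>, \<tau>})" by blast
    qed
    then show "src ` (C - {p} \<union> S) \<union> tgt ` (C - {p} \<union> S) \<subseteq> src ` C \<union> tgt ` C \<union> (\<lambda>u. (p, u)) ` (verts R - {\<iota>, \<tau>})"
      by (auto simp: image_Un)
  qed
  finally have "verts (replace RS E p) = src ` (C - {p} \<union> S) \<union> tgt ` (C - {p} \<union> S)" .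
  moreover have "replace RS E p \<in> expansions RS"
    using expansions.replace_exp[OF E1(1)] E1(2) p(1) by blast
  moreover have "arcs (replace RS E p) = C - {p} \<union> S"
    by (simp add: replace_def S_def E1(2))
  ultimately show ?thesis
    unfolding realizes_def using ends by blast
qed

lemma is_cut_merge_children:
  assumes C: "is_cut C" and w: "w \<in> C" and longest: "\<forall>c\<in>C. length c \<le> length w" and len: "2 \<le> length w"
  defines "p \<equiv> butlast w"
  defines "S \<equiv> (\<lambda>z. p @ [z]) ` arcs R"
  shows "S \<subseteq> C" "p \<notin> C" "p \<noteq> []" "is_cut (C - S \<union> {p})"
proof -
  have fin: "finite C" and val: "\<And>w. w \<in> C \<Longrightarrow> valid_word RS w"
    and cov: "\<And>\<omega>. \<omega> \<in> Omega RS \<Longrightarrow> \<exists>w\<in>C. starts_with \<omega> w"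
    and anti: "\<And>w w'. w \<in> C \<Longrightarrow> w' \<in> C \<Longrightarrow> prefix w w' \<Longrightarrow> w = w'"
    using C unfolding is_cut_def by blast+
  have "w \<noteq> []" using len by auto
  then have wp: "w = p @ [last w]" by (simp add: p_def)
  have lw: "length w = Suc (length p)" using len by (simp add: p_def)
  then show p0: "p \<noteq> []" using len by auto
  have pv: "valid_word RS p" "last w \<in> arcs R"
    using val[OF w] valid_word_append_iff[OF p0] wp by (metis empty_subsetI insert_subset list.set)+
  show pC: "p \<notin> C"
    using anti[OF _ w, of p] wp by (metis prefixI append_self_conv list.distinct(1))
  show SC: "S \<subseteq> C"
  proof
    fix s assume "s \<in> S"
    then obtain z where s: "s = p @ [z]" "z \<in> arcs R" unfolding S_def by blast
    have vs: "valid_word RS s" using valid_word_snoc[OF pv(1) s(2)] s(1) by simp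
    obtain c where c: "c \<in> C" "prefix c s \<or> prefix s c"
      using is_cut_starts_with_prefix[OF C vs] .
    have "length s = length w" using s lw by simp
    then have "prefix s c \<Longrightarrow> c = s"
      using longest c(1) prefix_length_le prefix_length_eq by (metis le_antisym)
    moreover have "prefix c s \<Longrightarrow> c \<noteq> s \<Longrightarrow> False"
    proof -
      assume "prefix c s" "c \<noteq> s"
      then have "prefix c p" using s(1) by (simp add: prefix_snoc)
      then have "c = w" using anti[OF c(1) w] wp prefix_order.trans by (metis prefixI)
      then show False using prefix_length_le[OF \<open>prefix c p\<close>] lw by simp
    qed
    ultimately show "s \<in> C" using c by blast
  qed
  show "is_cut (C - S \<union> {p})"
    unfolding is_cut_def
  proof (intro conjI ballI impI)
    show "finite (C - S \<union> {p})" using fin by simp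
    show "valid_word RS x" if "x \<in> C - S \<union> {p}" for x using that val pv by auto
  next
    fix \<omega> assume "\<omega> \<in> Omega RS"
    then obtain c where c: "c \<in> C" "starts_with \<omega> c" using cov by blast
    show "\<exists>w\<in>C - S \<union> {p}. starts_with \<omega> w"
    proof (cases "c \<in> S")
      case True
      then have "starts_with \<omega> p" using starts_with_prefix[OF c(2) _ p0] by (auto simp: S_def)
      then show ?thesis by blast
    qed (use c in blast)
  next
    fix a b assume ab: "a \<in> C - S \<union> {p}" "b \<in> C - S \<union> {p}" "prefix a b"
    have no_ext: "\<not> prefix p x" if x: "x \<in> C - S" for x
    proof
      assume "prefix p x"
      then obtain r where r: "x = p @ r" by (auto simp: prefix_def)
      moreover have "x \<noteq> p" using x pC by auto
      ultimately obtain z r' where zr: "x = p @ [z] @ r'" by (cases r) auto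
      then have "z \<in> arcs R" using val[of x] x valid_word_append_iff[OF p0] by auto
      then have "p @ [z] \<in> S" by (simp add: S_def)
      then have "p @ [z] = x" using anti[of "p @ [z]" x] SC x zr by auto
      then show False using x \<open>p @ [z] \<in> S\<close> by simp
    qed
    have no_anc: "\<not> prefix x p" if x: "x \<in> C" for x
    proof
      assume "prefix x p"
      then have "prefix x w" using wp prefix_order.trans by (metis prefixI)
      then have "x = w" using anti[OF x w] by simp
      then show False using prefix_length_le[OF \<open>prefix x p\<close>] lw by simp
    qed
    show "a = b"
    proof (cases "a = p")
      case True
      then show ?thesis using ab(2,3) no_ext by auto
    next
      case False
      then show ?thesis using ab no_anc anti by auto
    qed
  qed
qed

lemma is_cut_realizable: "is_cut C \<Longrightarrow> \<exists>E. realizes E C"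
proof (induction "\<Sum>w\<in>C. length w" arbitrary: C rule: less_induct)
  case less
  show ?case
  proof (cases "\<forall>w\<in>C. length w = 1")
    case True
    then show ?thesis using realizes_lift0[OF less.prems] by blast
  next
    case False
    have fin: "finite C" and val: "\<And>w. w \<in> C \<Longrightarrow> valid_word RS w"
      using less.prems unfolding is_cut_def by blast+
    obtain w0 where w0: "w0 \<in> C" "length w0 \<noteq> 1" using False by blast
    have "Max (length ` C) \<in> length ` C" using fin w0(1) by (intro Max_in) auto
    then obtain w where w: "w \<in> C" "length w = Max (length ` C)" by auto
    then have longest: "\<forall>c\<in>C. length c \<le> length w" using fin by simp
    have "w0 \<noteq> []" using val[OF w0(1)] by (rule valid_word_neq_Nil)
    then have "2 \<le> length w0"
      using w0(2) by (cases w0) (auto simp: Suc_le_eq)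
    then have "2 \<le> length w"
      using longest w0(1) le_trans by blast
    define p where "p = butlast w"
    define S where "S = (\<lambda>z. p @ [z]) ` arcs R"
    note merge = is_cut_merge_children[OF less.prems w(1) longest \<open>2 \<le> length w\<close>, folded p_def, folded S_def]
    have lenS: "length s = Suc (length p)" if "s \<in> S" for s
      using that by (auto simp: S_def)
    have "card S = card (arcs R)" unfolding S_def by (rule card_image) (simp add: inj_on_def)
    have "length p < 2 * Suc (length p)" by simp
    also have "\<dots> \<le> card (arcs R) * Suc (length p)" using two_le_card_arcs by (rule mult_le_mono1)
    also have "\<dots> = (\<Sum>s\<in>S. length s)" using lenS \<open>card S = card (arcs R)\<close> by simp
    finally have "length p < (\<Sum>s\<in>S. length s)" .
    moreover have "finite S" using merge(1) fin finite_subset by blast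
    ultimately have "(\<Sum>w\<in>C - S \<union> {p}. length w) < (\<Sum>w\<in>C. length w)"
      using merge(1,2) fin by (simp add: sum.subset_diff[OF merge(1) fin])
    then obtain E' where E': "realizes E' (C - S \<union> {p})"
      using less.hyps merge(4) by blast
    have "\<forall>z\<in>arcs R. p @ [z] \<notin> C - S \<union> {p}" by (auto simp: S_def)
    then have "realizes (replace RS E' p) ((C - S \<union> {p}) - {p} \<union> S)"
      using realizes_replace[OF E' _ merge(3)] by (simp add: S_def)
    moreover have "(C - S \<union> {p}) - {p} \<union> S = C" using merge(1,2) by blast
    ultimately show ?thesis by auto
  qed
qed

end

lemma topspace_X_top: "topspace (X_top RS) = Xsp RS"
proof -
  have open_X: "openin (X_top RS) = X_open RS"
    unfolding X_top_def using topology_inverse'[OF istopology_X_open[of RS]] .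
  have "topspace (Omega_top RS) = Omega RS"
    unfolding Omega_top_def by (simp add: topspace_product_topology)
  moreover have "{\<omega> \<in> Omega RS. cls RS \<omega> \<in> Xsp RS} = Omega RS"
    by (auto simp: cls_def Xsp_def intro: quotientI)
  ultimately have "X_open RS (Xsp RS)"
    unfolding X_open_def by (metis openin_topspace order_refl)
  then show ?thesis
    unfolding topspace_def open_X by (auto simp: X_open_def)
qed

lemma rearrangement_bij_betw: "rearrangement RS f \<Longrightarrow> bij_betw f (Xsp RS) (Xsp RS)"
  unfolding rearrangement_def bij_betw_def
  using homeomorphic_imp_injective_map[of "X_top RS" "X_top RS" f]
    homeomorphic_imp_surjective_map[of "X_top RS" "X_top RS" f]
  by (simp add: topspace_X_top)

lemma mult_rearr_group_apply: "p \<in> Xsp RS \<Longrightarrow> (f \<otimes>\<^bsub>rearr_group RS\<^esub> g) p = f (g p)"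
  by (simp add: rearr_group_def compose_eq)

lemma one_rearr_group_apply: "p \<in> Xsp RS \<Longrightarrow> \<one>\<^bsub>rearr_group RS\<^esub> p = p"
  by (simp add: rearr_group_def)

locale finite_rearrangement_group = expanding_system RS for RS :: "('v,'e) repsys" +
  fixes H :: "((nat \<Rightarrow> 'e) set \<Rightarrow> (nat \<Rightarrow> 'e) set) set"
  assumes subgroup_H: "subgroup H (rearr_group RS)" and finite_H: "finite H"
begin

abbreviation "G \<equiv> rearr_group RS"

lemma mult_in_H: "f \<in> H \<Longrightarrow> g \<in> H \<Longrightarrow> f \<otimes>\<^bsub>G\<^esub> g \<in> H"
  and one_in_H: "\<one>\<^bsub>G\<^esub> \<in> H"
  and carrier_H: "f \<in> H \<Longrightarrow> f \<in> carrier G"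
  using subgroup.m_closed[OF subgroup_H] subgroup.one_closed[OF subgroup_H] subgroup.subset[OF subgroup_H]
  by blast+

lemma rearrangement_H: "f \<in> H \<Longrightarrow> rearrangement RS f"
  using carrier_H by (simp add: rearr_group_def)

lemma restrict_funpow_in_H: "f \<in> H \<Longrightarrow> restrict (f ^^ k) (Xsp RS) \<in> H"
proof (induction k)
  case 0
  have "restrict (f ^^ 0) (Xsp RS) = \<one>\<^bsub>G\<^esub>" by (simp add: rearr_group_def)
  then show ?case using one_in_H by (simp only:)
next
  case (Suc k)
  have "restrict (f ^^ Suc k) (Xsp RS) = f \<otimes>\<^bsub>G\<^esub> restrict (f ^^ k) (Xsp RS)"
    by (rule ext) (simp add: rearr_group_def compose_def)
  then show ?case using mult_in_H[OF Suc.prems Suc.IH[OF Suc.prems]] by (simp only:)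
qed

text \<open>G is not known to be a group, so inverses are not taken in G: in the finite set H, every f
  has finite order.\<close>
lemma inverse_in_H: assumes f: "f \<in> H" shows "\<exists>g\<in>H. \<forall>p\<in>Xsp RS. f (g p) = p \<and> g (f p) = p"
proof -
  have "range (\<lambda>k. restrict (f ^^ k) (Xsp RS)) \<subseteq> H"
    using restrict_funpow_in_H[OF f] by blast
  then have "finite (range (\<lambda>k. restrict (f ^^ k) (Xsp RS)))"
    using finite_H finite_subset by blast
  then have "\<not> inj (\<lambda>k. restrict (f ^^ k) (Xsp RS))"
    using finite_imageD infinite_UNIV_nat by blast
  then obtain i j where ij: "i \<noteq> j" "restrict (f ^^ i) (Xsp RS) = restrict (f ^^ j) (Xsp RS)"
    unfolding inj_def by blast
  obtain a b where ab: "a < b" "restrict (f ^^ a) (Xsp RS) = restrict (f ^^ b) (Xsp RS)"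
  proof (cases "i < j")
    case True
    then show ?thesis using that ij(2) by blast
  next
    case False
    then have "j < i" using ij(1) by simp
    then show ?thesis using that ij(2)[symmetric] by blast
  qed
  define d where "d = b - a"
  have bij: "bij_betw f (Xsp RS) (Xsp RS)" using rearrangement_bij_betw[OF rearrangement_H[OF f]] .
  have per: "(f ^^ d) p = p" if p: "p \<in> Xsp RS" for p
  proof -
    have "(f ^^ a) ((f ^^ d) p) = (f ^^ b) p"
      using ab(1) funpow_add[of a d f] by (simp add: d_def)
    also have "\<dots> = (f ^^ a) p"
      using fun_cong[OF ab(2), of p] p by simp
    finally have "(f ^^ a) ((f ^^ d) p) = (f ^^ a) p" .
    moreover have "inj_on (f ^^ a) (Xsp RS)" using bij_betw_funpow[OF bij] by (simp add: bij_betw_def)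
    moreover have "(f ^^ d) p \<in> Xsp RS" using bij_betwE[OF bij_betw_funpow[OF bij]] p by blast
    ultimately show ?thesis
      using p by (blast dest: inj_onD)
  qed
  have d: "d = Suc (d - 1)" using ab(1) by (simp add: d_def)
  define g where "g = restrict (f ^^ (d - 1)) (Xsp RS)"
  have "f (g p) = p \<and> g (f p) = p" if p: "p \<in> Xsp RS" for p
  proof
    have "f (g p) = (f ^^ Suc (d - 1)) p" using p by (simp add: g_def)
    then show "f (g p) = p" using per[OF p] by (simp only: d[symmetric])
    have "f p \<in> Xsp RS" using bij_betwE[OF bij] p by blast
    then have "g (f p) = (f ^^ Suc (d - 1)) p" by (simp add: g_def funpow_Suc_right del: funpow.simps)
    then show "g (f p) = p" using per[OF p] by (simp only: d[symmetric])
  qed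
  moreover have "g \<in> H" unfolding g_def by (rule restrict_funpow_in_H[OF f])
  ultimately show ?thesis by blast
qed

definition inv_H :: "((nat \<Rightarrow> 'e) set \<Rightarrow> (nat \<Rightarrow> 'e) set) \<Rightarrow> (nat \<Rightarrow> 'e) set \<Rightarrow> (nat \<Rightarrow> 'e) set" where
  "inv_H f = (SOME g. g \<in> H \<and> (\<forall>p\<in>Xsp RS. f (g p) = p \<and> g (f p) = p))"

lemma inv_H:
  assumes "f \<in> H"
  shows "inv_H f \<in> H" "\<And>p. p \<in> Xsp RS \<Longrightarrow> f (inv_H f p) = p" "\<And>p. p \<in> Xsp RS \<Longrightarrow> inv_H f (f p) = p"
  using someI_ex[OF inverse_in_H[OF assms, unfolded Bex_def]] unfolding inv_H_def by blast+

section \<open>A cut invariant under the group\<close>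

definition depth_of :: "((nat \<Rightarrow> 'e) set \<Rightarrow> (nat \<Rightarrow> 'e) set) \<Rightarrow> nat" where
  "depth_of f = (SOME N. \<forall>y. valid_word RS y \<and> N \<le> length y \<longrightarrow> (\<exists>u. canon f y u))"

definition depth :: nat where
  "depth = (\<Sum>f\<in>H. depth_of f)"

lemma canon_deep:
  assumes f: "f \<in> H" and y: "valid_word RS y" "depth \<le> length y"
  shows "canon f y (canon_image f y)"
proof -
  have "\<forall>y. valid_word RS y \<and> depth_of f \<le> length y \<longrightarrow> (\<exists>u. canon f y u)"
    unfolding depth_of_def using rearrangement_canon_deep[OF rearrangement_H[OF f]] by (rule someI_ex)
  moreover have "depth_of f \<le> depth"
    unfolding depth_def by (rule member_le_sum[OF f _ finite_H]) simp
  ultimately obtain u where "canon f y u" using y by (meson le_trans)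
  then show ?thesis using canon_image_eq by simp
qed

definition level_words :: "'e list set" where
  "level_words = {y. valid_word RS y \<and> length y = Suc depth}"

lemma finite_level_words: "finite level_words"
proof (rule finite_subset)
  show "level_words \<subseteq> {xs. set xs \<subseteq> arcs G0 \<union> arcs R \<and> length xs = Suc depth}"
    unfolding level_words_def valid_word_def by (auto simp: neq_Nil_conv)
  show "finite {xs. set xs \<subseteq> arcs G0 \<union> arcs R \<and> length xs = Suc depth}"
    by (rule finite_lists_length_eq) (simp add: finite_rep_arcs finite_base_arcs)
qed

lemma canon_level: "f \<in> H \<Longrightarrow> x \<in> level_words \<Longrightarrow> canon f x (canon_image f x)"
  unfolding level_words_def by (rule canon_deep) auto

definition image_cut :: "((nat \<Rightarrow> 'e) set \<Rightarrow> (nat \<Rightarrow> 'e) set) \<Rightarrow> 'e list set" where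
  "image_cut f = canon_image f ` level_words"

text \<open>The level word p of \<omega> is the image of the edge y = f\<inverse>(p); y is either longer than p, and then
  an extension of a level word x with f(x) a prefix of p, or shorter, and then y r is a level word
  mapped to p r for the continuation r of p in \<omega>.\<close>
lemma image_cut_covers:
  assumes f: "f \<in> H" and \<omega>: "\<omega> \<in> Omega RS"
  shows "\<exists>w\<in>image_cut f. starts_with \<omega> w"
proof -
  define g where "g = inv_H f"
  have g: "g \<in> H" "\<And>p. p \<in> Xsp RS \<Longrightarrow> f (g p) = p"
    using inv_H[OF f] g_def by auto
  define p where "p = pref \<omega> depth"
  have p: "p \<in> level_words" "starts_with \<omega> p"
    using valid_word_pref[OF \<omega>] starts_with_pref by (simp_all add: level_words_def p_def)
  define y where "y = canon_image g p"
  have cfy: "canon f y p" using canon_inv[OF canon_level[OF g(1) p(1)] g(2)] y_def by simp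
  have vy: "valid_word RS y" using canonD(1)[OF cfy] .
  show ?thesis
  proof (cases "Suc depth \<le> length y")
    case True
    define x where "x = take (Suc depth) y"
    have yx: "y = x @ drop (Suc depth) y" by (simp add: x_def)
    have x: "x \<in> level_words" "x \<noteq> []"
      using vy True yx valid_word_append_iff[of x "drop (Suc depth) y"] valid_word_neq_Nil[OF vy]
      by (auto simp: level_words_def x_def)
    have "canon f y (canon_image f x @ drop (Suc depth) y)"
      using canon_append[OF canon_level[OF f x(1)]] vy yx by metis
    then have "p = canon_image f x @ drop (Suc depth) y"
      using canon_unique[OF cfy] by simp
    moreover have "canon_image f x \<noteq> []"
      using canonD(2)[OF canon_level[OF f x(1)]] valid_word_neq_Nil by blast
    ultimately have "starts_with \<omega> (canon_image f x)"
      using starts_with_prefix[OF p(2)] by (metis prefixI)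
    then show ?thesis using x(1) unfolding image_cut_def by blast
  next
    case False
    define k where "k = Suc depth - length y"
    define r where "r = map \<omega> [Suc depth..<Suc depth + k]"
    have "set r \<subseteq> arcs R" using Omega_Suc[OF \<omega>] by (auto simp: r_def)
    then have yr: "y @ r \<in> level_words"
      using vy False valid_word_append_iff[OF valid_word_neq_Nil[OF vy]] by (simp add: level_words_def r_def k_def)
    have "canon_image f (y @ r) = p @ r"
      using canon_image_eq[OF canon_append[OF cfy]] yr by (simp add: level_words_def)
    moreover have "[0..<Suc depth + k] = [0..<Suc depth] @ [Suc depth..<Suc depth + k]"
      by (rule upt_add_eq_append) simp
    then have "p @ r = pref \<omega> (depth + k)"
      by (simp add: p_def r_def pref_def del: upt_Suc)
    ultimately have "starts_with \<omega> (canon_image f (y @ r))"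
      by (simp add: starts_with_pref)
    then show ?thesis using yr unfolding image_cut_def by blast
  qed
qed

lemma is_cut_image_cut: assumes f: "f \<in> H" shows "is_cut (image_cut f)"
  unfolding is_cut_def
proof (intro conjI ballI impI)
  show "finite (image_cut f)" unfolding image_cut_def using finite_level_words by simp
  show "valid_word RS w" if "w \<in> image_cut f" for w
    using that canon_level[OF f] canonD(2) unfolding image_cut_def by blast
  show "\<exists>w\<in>image_cut f. starts_with \<omega> w" if "\<omega> \<in> Omega RS" for \<omega>
    using image_cut_covers[OF f that] .
next
  fix a b assume ab: "a \<in> image_cut f" "b \<in> image_cut f" "prefix a b"
  obtain x1 x2 where x: "x1 \<in> level_words" "x2 \<in> level_words" "a = canon_image f x1" "b = canon_image f x2"
    using ab(1,2) unfolding image_cut_def by blast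
  obtain r where r: "b = a @ r" using ab(3) by (auto simp: prefix_def)
  have c: "canon f x1 a" "canon f x2 b" using canon_level[OF f] x by auto
  have "canon (inv_H f) a x1" "canon (inv_H f) b x2"
    using canon_inv[OF c(1) inv_H(3)[OF f]] canon_inv[OF c(2) inv_H(3)[OF f]] by auto
  then have "x2 = x1 @ r"
    using canon_unique canon_append canonD(2)[OF c(2)] r by metis
  moreover have "length x1 = length x2" using x by (simp add: level_words_def)
  ultimately show "a = b" using r by simp
qed

definition all_images :: "'e list set" where
  "all_images = (\<Union>f\<in>H. image_cut f)"

definition common_cut :: "'e list set" where
  "common_cut = {w \<in> all_images. \<not> (\<exists>q\<in>all_images. strict_prefix w q)}"

lemma finite_all_images: "finite all_images"
  unfolding all_images_def using finite_H is_cut_image_cut by (auto simp: is_cut_def)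

lemma valid_all_images: "w \<in> all_images \<Longrightarrow> valid_word RS w"
  unfolding all_images_def using is_cut_image_cut by (auto simp: is_cut_def)

lemma is_cut_common_cut: "is_cut common_cut"
  unfolding is_cut_def
proof (intro conjI ballI impI)
  show "finite common_cut" using finite_all_images by (simp add: common_cut_def)
  show "valid_word RS w" if "w \<in> common_cut" for w
    using that valid_all_images by (simp add: common_cut_def)
next
  fix \<omega> assume \<omega>: "\<omega> \<in> Omega RS"
  define P where "P = {q \<in> all_images. starts_with \<omega> q}"
  have "finite P" using finite_all_images by (simp add: P_def)
  moreover have "P \<noteq> {}"
    using image_cut_covers[OF one_in_H \<omega>] one_in_H by (auto simp: P_def all_images_def)
  ultimately have "Max (length ` P) \<in> length ` P" by (intro Max_in) auto
  then obtain p where p: "p \<in> P" "length p = Max (length ` P)" by auto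
  then have p_longest: "\<forall>q\<in>P. length q \<le> length p" using \<open>finite P\<close> by simp
  have "\<not> strict_prefix p q" if q: "h \<in> H" "q \<in> image_cut h" for h q
  proof
    assume pq: "strict_prefix p q"
    obtain q' where q': "q' \<in> image_cut h" "starts_with \<omega> q'"
      using image_cut_covers[OF q(1) \<omega>] by blast
    have "q' \<in> P" using q' q(1) by (auto simp: P_def all_images_def)
    then have "length q' \<le> length p" using p_longest by blast
    moreover have "prefix p q' \<or> prefix q' p"
      using starts_with_prefix_cases[of \<omega> p q'] p(1) q'(2) by (simp add: P_def)
    ultimately have "prefix q' p"
      using prefix_length_le prefix_length_eq by (metis le_antisym)
    then have "prefix q' q" using pq by (meson prefix_order.dual_order.strict_implies_order prefix_order.order_trans)
    then have "q' = q" using is_cut_image_cut[OF q(1)] q'(1) q(2) by (auto simp: is_cut_def)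
    then show False using pq \<open>length q' \<le> length p\<close> prefix_length_less by fastforce
  qed
  then have "p \<in> common_cut" using p(1) by (auto simp: common_cut_def P_def all_images_def)
  then show "\<exists>w\<in>common_cut. starts_with \<omega> w" using p(1) by (auto simp: P_def)
next
  fix a b assume "a \<in> common_cut" "b \<in> common_cut" "prefix a b"
  then show "a = b" by (auto simp: common_cut_def strict_prefix_def)
qed

lemma common_cut_refines: assumes w: "w \<in> common_cut" and h: "h \<in> H" shows "\<exists>q\<in>image_cut h. prefix q w"
proof -
  have vw: "valid_word RS w" using w valid_all_images by (simp add: common_cut_def)
  obtain q where q: "q \<in> image_cut h" "prefix q w \<or> prefix w q"
    using is_cut_starts_with_prefix[OF is_cut_image_cut[OF h] vw] by blast
  have "q \<in> all_images" using q(1) h by (auto simp: all_images_def)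
  then have "\<not> strict_prefix w q" using w by (auto simp: common_cut_def)
  then have "prefix q w" using q(2) by (auto simp: strict_prefix_def)
  then show ?thesis using q(1) by blast
qed

lemma image_cut_one: "image_cut \<one>\<^bsub>G\<^esub> = level_words"
proof -
  have "canon_image \<one>\<^bsub>G\<^esub> x = x" if "x \<in> level_words" for x
    using that by (auto intro!: canon_image_eq canon_id one_rearr_group_apply simp: level_words_def)
  then show ?thesis unfolding image_cut_def by simp
qed

lemma common_cut_deep: "w \<in> common_cut \<Longrightarrow> Suc depth \<le> length w"
  using common_cut_refines[OF _ one_in_H] image_cut_one prefix_length_le by (fastforce simp: level_words_def)

lemma canon_common_cut: assumes "f \<in> H" "w \<in> common_cut" shows "canon f w (canon_image f w)"
  using canon_deep[OF assms(1) valid_all_images] common_cut_deep[OF assms(2)] assms(2)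
  by (simp add: common_cut_def)

text \<open>An edge of the common cut is an image of a level word whose image under any f \<in> H lies in
  all_images again; maximality is transported back by the inverse of f.\<close>
lemma canon_image_in_common_cut:
  assumes f: "f \<in> H" and w: "w \<in> common_cut"
  shows "canon_image f w \<in> common_cut"
proof -
  have "w \<in> all_images" using w by (simp add: common_cut_def)
  then obtain g x where gx: "g \<in> H" "x \<in> level_words" "w = canon_image g x"
    unfolding all_images_def image_cut_def by blast
  define v where "v = canon_image f w"
  have cf: "canon f w v" using canon_common_cut[OF f w] v_def by simp
  have "canon (f \<otimes>\<^bsub>G\<^esub> g) x v"
    by (rule canon_comp[OF canon_level[OF gx(1,2)]]) (use cf gx(3) in \<open>simp_all add: mult_rearr_group_apply\<close>)
  then have "v \<in> image_cut (f \<otimes>\<^bsub>G\<^esub> g)"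
    using gx(2) canon_image_eq unfolding image_cut_def by (metis image_eqI)
  then have vU: "v \<in> all_images"
    using mult_in_H[OF f gx(1)] unfolding all_images_def by blast
  have "\<not> strict_prefix v q" if q: "q \<in> all_images" for q
  proof
    assume vq: "strict_prefix v q"
    obtain h y where hy: "h \<in> H" "y \<in> level_words" "q = canon_image h y"
      using q unfolding all_images_def image_cut_def by blast
    obtain r where r: "q = v @ r" "r \<noteq> []" using vq by (auto simp: strict_prefix_def prefix_def)
    have cv: "canon (inv_H f) v w" using canon_inv[OF cf inv_H(3)[OF f]] .
    have "valid_word RS (v @ r)"
      using canonD(2)[OF canon_level[OF hy(1,2)]] hy(3) r(1) by simp
    with cv have "canon (inv_H f) (v @ r) (w @ r)"
      by (rule canon_append)
    then have "canon (inv_H f) q (w @ r)"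
      using r(1) by simp
    then have "canon (inv_H f \<otimes>\<^bsub>G\<^esub> h) y (w @ r)"
      by (intro canon_comp[OF canon_level[OF hy(1,2)]]) (simp_all add: hy(3) mult_rearr_group_apply)
    then have "w @ r \<in> image_cut (inv_H f \<otimes>\<^bsub>G\<^esub> h)"
      using hy(2) canon_image_eq unfolding image_cut_def by (metis image_eqI)
    then have "w @ r \<in> all_images"
      using mult_in_H[OF inv_H(1)[OF f] hy(1)] unfolding all_images_def by blast
    then show False using w r(2) by (auto simp: common_cut_def strict_prefix_def)
  qed
  then show ?thesis using vU v_def by (simp add: common_cut_def)
qed

lemma canon_image_inverse:
  assumes "f \<in> H" "\<And>p. p \<in> Xsp RS \<Longrightarrow> g (f p) = p" "w \<in> common_cut"
  shows "canon_image g (canon_image f w) = w"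
  using canon_inv[OF canon_common_cut[OF assms(1,3)] assms(2)] canon_image_eq by simp

section \<open>The group acts by automorphisms of the expansion realizing the common cut\<close>

text \<open>A vertex of the expansion is a corner of some edge of the common cut; f moves it to the
  same corner of the image edge, independently of the choice of that edge by canon_glued.\<close>
definition vert_perm :: "((nat \<Rightarrow> 'e) set \<Rightarrow> (nat \<Rightarrow> 'e) set) \<Rightarrow> 'e list \<times> 'v \<Rightarrow> 'e list \<times> 'v" where
  "vert_perm f v = (let c = (SOME c. fst c \<in> common_cut \<and> snd c \<in> {\<iota>, \<tau>} \<and> glued (fst c) (snd c) = v)
                    in glued (canon_image f (fst c)) (snd c))"

lemma vert_perm_glued:
  assumes f: "f \<in> H" and x: "x \<in> common_cut" and r: "r \<in> {\<iota>, \<tau>}"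
  shows "vert_perm f (glued x r) = glued (canon_image f x) r"
proof -
  define c where "c = (SOME c. fst c \<in> common_cut \<and> snd c \<in> {\<iota>, \<tau>} \<and> glued (fst c) (snd c) = glued x r)"
  have "\<exists>c. fst c \<in> common_cut \<and> snd c \<in> {\<iota>, \<tau>} \<and> glued (fst c) (snd c) = glued x r"
    using x r by (intro exI[of _ "(x, r)"]) simp
  then have c: "fst c \<in> common_cut" "snd c \<in> {\<iota>, \<tau>}" "glued (fst c) (snd c) = glued x r"
    unfolding c_def by (metis (mono_tags, lifting) someI_ex)+
  then have "glued (canon_image f (fst c)) (snd c) = glued (canon_image f x) r"
    using canon_glued[OF canon_common_cut[OF f c(1)] canon_common_cut[OF f x] c(2) r] by blast
  then show ?thesis
    unfolding vert_perm_def c_def[symmetric] by simp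
qed

definition cut_verts :: "('e list \<times> 'v) set" where
  "cut_verts = {glued x r | x r. x \<in> common_cut \<and> r \<in> {\<iota>, \<tau>}}"

lemma cut_verts_eq: "cut_verts = src ` common_cut \<union> tgt ` common_cut"
proof -
  have "cut_verts = (\<lambda>x. glued x \<iota>) ` common_cut \<union> (\<lambda>x. glued x \<tau>) ` common_cut"
    unfolding cut_verts_def by blast
  then show ?thesis by (simp add: glued_ini glued_ter)
qed

lemma vert_perm_in_cut_verts: "f \<in> H \<Longrightarrow> v \<in> cut_verts \<Longrightarrow> vert_perm f v \<in> cut_verts"
  using vert_perm_glued canon_image_in_common_cut unfolding cut_verts_def by fastforce

lemma vert_perm_inverse:
  assumes "f \<in> H" "g \<in> H" "\<And>p. p \<in> Xsp RS \<Longrightarrow> g (f p) = p" "v \<in> cut_verts"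
  shows "vert_perm g (vert_perm f v) = v"
proof -
  obtain x r where "x \<in> common_cut" "r \<in> {\<iota>, \<tau>}" "v = glued x r"
    using assms(4) unfolding cut_verts_def by blast
  then show ?thesis
    using vert_perm_glued[OF assms(1)] vert_perm_glued[OF assms(2)] canon_image_in_common_cut[OF assms(1)]
      canon_image_inverse[OF assms(1,3)] by simp
qed

lemma H_subset_Aut_R:
  assumes E: "realizes E common_cut"
  shows "H \<subseteq> Aut_R RS E"
proof
  fix f assume f: "f \<in> H"
  have E1: "arcs E = common_cut" "\<And>x. x \<in> common_cut \<Longrightarrow> tail E x = glued x \<iota> \<and> head E x = glued x \<tau>"
    "verts E = cut_verts"
    using E unfolding realizes_def cut_verts_eq by (auto simp: glued_ini glued_ter)
  define g where "g = inv_H f"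
  have g: "g \<in> H" "\<And>p. p \<in> Xsp RS \<Longrightarrow> f (g p) = p" "\<And>p. p \<in> Xsp RS \<Longrightarrow> g (f p) = p"
    using inv_H[OF f] g_def by auto
  have "bij_betw (canon_image f) (arcs E) (arcs E)"
    unfolding E1(1)
  proof (rule bij_betw_byWitness[where f'="canon_image g"])
    show "\<forall>a\<in>common_cut. canon_image g (canon_image f a) = a"
      using canon_image_inverse[OF f g(3)] by blast
    show "\<forall>a\<in>common_cut. canon_image f (canon_image g a) = a"
      using canon_image_inverse[OF g(1) g(2)] by blast
  qed (use canon_image_in_common_cut[OF f] canon_image_in_common_cut[OF g(1)] in blast)+
  moreover have "bij_betw (vert_perm f) (verts E) (verts E)"
    unfolding E1(3)
  proof (rule bij_betw_byWitness[where f'="vert_perm g"])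
    show "\<forall>a\<in>cut_verts. vert_perm g (vert_perm f a) = a"
      using vert_perm_inverse[OF f g(1) g(3)] by blast
    show "\<forall>a\<in>cut_verts. vert_perm f (vert_perm g a) = a"
      using vert_perm_inverse[OF g(1) f g(2)] by blast
  qed (use vert_perm_in_cut_verts[OF f] vert_perm_in_cut_verts[OF g(1)] in blast)+
  moreover have "tail E (canon_image f x) = vert_perm f (tail E x) \<and>
                 head E (canon_image f x) = vert_perm f (head E x)" if "x \<in> arcs E" for x
    using that E1(1,2) canon_image_in_common_cut[OF f] vert_perm_glued[OF f] by simp
  moreover have "canonical_on RS f x (canon_image f x)" if "x \<in> arcs E" for x
    using that E1(1) canon_common_cut[OF f] by (simp add: canon_def)
  ultimately show "f \<in> Aut_R RS E"
    unfolding Aut_R_def using carrier_H[OF f] by blast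
qed

end

theorem theorem2p9:
  fixes RS :: "('v,'e) repsys"
    and H :: "((nat \<Rightarrow> 'e) set \<Rightarrow> (nat \<Rightarrow> 'e) set) set"
  assumes "expanding RS"
    and "subgroup H (rearr_group RS)"
    and "finite H"
  shows "\<exists>E\<in>expansions RS. H \<subseteq> Aut_R RS E"
proof -
  interpret finite_rearrangement_group RS H
    using assms by (intro finite_rearrangement_group.intro expanding_system.intro
        finite_rearrangement_group_axioms.intro)
  obtain E where E: "realizes E common_cut"
    using is_cut_realizable[OF is_cut_common_cut] by blast
  then have "E \<in> expansions RS" by (simp add: realizes_def)
  moreover have "H \<subseteq> Aut_R RS E" using H_subset_Aut_R[OF E] .
  ultimately show ?thesis by blast
qed

end
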